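(* Consider the VRD$^2$ algorithm with constant step-size $\mu>0$, as defined in the context, under the standing assumptions listed there. There exists $\bar\mu>0$ such that for every $0<\mu\le\bar\mu$ there is a constant $C<\infty$ (independent of $i$) with $$\mathbb{E}\,\|w_{i,k}-w^\star_k\|^2\le\rho^iC\qquad\text{for all agents }k\text{ and all }i>0,$$ where $w^\star=\mathrm{col}\{w^\star_1,\dots,w^\star_K\}$ is the minimizer of $R$ and $$\rho=\max\Big(1-\frac{1-\lambda}{2N},\;1-\frac{\mu\nu}{4}\Big).$$
   Context: Data and risk. There are $N$ data pairs $(h_n,\gamma_n)$, $n=1,\dots,N$, with $h_n\in\mathbb{R}^M$ and scalar labels $\gamma_n$. The feature vector and the parameter are partitioned into $K$ blocks, $h_n=\mathrm{col}\{h_{n,1},\dots,h_{n,K}\}$, $w=\mathrm{col}\{w_1,\dots,w_K\}$ with $h_{n,k},w_k\in\mathbb{R}^{M_k}$, $\sum_k M_k=M$; block $k$ is held by agent $k$. The empirical risk is $$R(w)=\frac1N\sum_{n=1}^N Q\Big(\sum_{k=1}^K h_{n,k}^{\mathsf T}w_k;\gamma_n\Big)+\sum_{k=1}^K r_k(w_k),$$ where $Q(\cdot;\gamma):\mathbb{R}\to\mathbb{R}$ is differentiable with derivative $\nabla_z Q(z;\gamma)$, and $r(w)=\sum_k r_k(w_k)$. Assumptions. (i) For every $n$, the map $w\mapsto Q(h_n^{\mathsf T}w;\gamma_n)$ has $L$-Lipschitz gradient, i.e. $\|\nabla_zQ(h_n^{\mathsf T}w_1;\gamma_n)h_n-\nabla_zQ(h_n^{\mathsf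 T}w_2;\gamma_n)h_n\|\le L\|w_1-w_2\|$, and $|\nabla_zQ(z_1;\gamma_n)-\nabla_zQ(z_2;\gamma_n)|\le\delta|z_1-z_2|$ for all $z_1,z_2$, with $L,\delta>0$. (ii) $r$ is convex with $\eta$-Lipschitz gradient. (iii) $R$ is $\nu$-strongly convex: $(\nabla R(w_1)-\nabla R(w_2))^{\mathsf T}(w_1-w_2)\ge\nu\|w_1-w_2\|^2$; $w^\star$ denotes its unique minimizer. (iv) Agents communicate over a strongly connected graph with combination matrix $A=[a_{\ell k}]\in\mathbb{R}^{K\times K}$, nonnegative, with $a_{\ell k}>0$ only if $\ell=k$ or $\ell$ is a neighbor of $k$ ($\ell\in\mathcal N_k$, where $\mathcal N_k$ includes $k$), $A=A^{\mathsf T}$, $A\mathbf 1_K=\mathbf 1_K$, and $a_{kk}>0$ for at least one $k$. $\lambda\in(0,1)$ denotes the second largest magnitude of the eigenvalues of $A$. VRD$^2$ algorithm (variance-reduced dynamic diffusion). Each agent $k$ stores $w_{i,k}$ and scalar tables $u^i_{n,k},v^i_{n,k}$, $n=1,\dots,N$, initialized $w_{1,k}=0$, $u^1_{n,k}=v^1_{n,k}=0$. At each iteration $i=1,2,\dots$ an index $n_i$ is drawn uniformly from $\{1,\dots,N\}$, independently of the past, and the same $n_i$ is used by all agents. Agent $k$ computes $$z_{n_i,k}=\sum_{\ell\in\mathcal N_k}a_{\ell k}\big(u^i_{n_i,\ell}+Kh_{n_i,\ell}^{\mathsf T}w_{i,\ell}-v^i_{n_i,\ell}\big),$$ $$w_{i+1,k}=w_{i,k}-\mu\Big\{\big[\nabla_zQ(z_{n_i,k};\gamma_{n_i})-\nabla_zQ(u^i_{n_i,k};\gamma_{n_i})\big]h_{n_i,k}+\frac1N\sum_{n=1}^N\nabla_zQ(u^i_{n,k};\gamma_n)h_{n,k}+\nabla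 r_k(w_{i,k})\Big\},$$ then sets $u^{i+1}_{n_i,k}=z_{n_i,k}$, $v^{i+1}_{n_i,k}=Kh_{n_i,k}^{\mathsf T}w_{i,k}$, and $u^{i+1}_{n,k}=u^i_{n,k}$, $v^{i+1}_{n,k}=v^i_{n,k}$ for $n\ne n_i$. (This is the PVRD$^2$ algorithm with pipeline depth $J=1$.) *)

theory Defs
  imports "HOL-Analysis.Analysis" "HOL-Library.Multiset"
begin

text \<open>Agents are indexed by a finite type 'k (K = CARD('k)); coordinates of
  R^M by a finite type 'm; blk j is the agent owning coordinate j.
  Data points are indexed by n < N.\<close>

definition eigvals :: "real^'k^'k \<Rightarrow> real set" where
  "eigvals A = {\<mu>. \<exists>x. x \<noteq> 0 \<and> A *v x = \<mu> *s x}"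

text \<open>Eigenvalues with multiplicity (for symmetric matrices the geometric
  multiplicity equals the algebraic one).\<close>
definition eig_mset :: "real^'k^'k \<Rightarrow> real multiset" where
  "eig_mset A = (\<Sum>\<mu>\<in>eigvals A. replicate_mset (dim {x. A *v x = \<mu> *s x}) \<mu>)"

definition second_largest_abs_eig :: "real^'k^'k \<Rightarrow> real" where
  "second_largest_abs_eig A =
     (let l = rev (sorted_list_of_multiset (image_mset abs (eig_mset A)))
      in if length l < 2 then 0 else l ! 1)"

definition blk_inner :: "('m::finite \<Rightarrow> 'k) \<Rightarrow> 'k \<Rightarrow> real^'m \<Rightarrow> real^'m \<Rightarrow> real" where
  "blk_inner blk k h w = (\<Sum>j\<in>{j. blk j = k}. h$j * w$j)"

definition blk_sqnorm :: "('m::finite \<Rightarrow> 'k) \<Rightarrow> 'k \<Rightarrow> real^'m \<Rightarrow> real" where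
  "blk_sqnorm blk k w = (\<Sum>j\<in>{j. blk j = k}. (w$j)^2)"

text \<open>State: (w, u, v) with w the stacked iterate (block k held by agent k),
  u n k = u_{n,k}, v n k = v_{n,k}.\<close>
type_synonym ('m,'k) vrd_state = "(real^'m) \<times> (nat \<Rightarrow> 'k \<Rightarrow> real) \<times> (nat \<Rightarrow> 'k \<Rightarrow> real)"

definition vrd_z ::
  "real^'k^'k \<Rightarrow> ('k \<Rightarrow> 'k \<Rightarrow> bool) \<Rightarrow> ('m::finite \<Rightarrow> 'k::finite) \<Rightarrow> (nat \<Rightarrow> real^'m)
   \<Rightarrow> nat \<Rightarrow> ('m,'k) vrd_state \<Rightarrow> 'k \<Rightarrow> real" where
  "vrd_z A nbr blk h n st k =
     (case st of (w, u, v) \<Rightarrow>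
       (\<Sum>l\<in>{l. l = k \<or> nbr l k}.
          A$l$k * (u n l + real CARD('k) * blk_inner blk l (h n) w - v n l)))"

definition vrd_step ::
  "real^'k^'k \<Rightarrow> ('k \<Rightarrow> 'k \<Rightarrow> bool) \<Rightarrow> ('m::finite \<Rightarrow> 'k::finite) \<Rightarrow> nat
   \<Rightarrow> (nat \<Rightarrow> real^'m) \<Rightarrow> (nat \<Rightarrow> real) \<Rightarrow> (real \<Rightarrow> real \<Rightarrow> real)
   \<Rightarrow> ('k \<Rightarrow> real^'m \<Rightarrow> real^'m) \<Rightarrow> real
   \<Rightarrow> ('m,'k) vrd_state \<Rightarrow> nat \<Rightarrow> ('m,'k) vrd_state" where
  "vrd_step A nbr blk N h \<gamma> dQ gr \<mu> st n =
     (case st of (w, u, v) \<Rightarrow>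
       (let z = vrd_z A nbr blk h n st in
        ((\<chi> j. w$j - \<mu> * ((dQ (z (blk j)) (\<gamma> n) - dQ (u n (blk j)) (\<gamma> n)) * (h n)$j
                         + (1 / real N) * (\<Sum>m<N. dQ (u m (blk j)) (\<gamma> m) * (h m)$j)
                         + (gr (blk j) w)$j)),
         u(n := z),
         v(n := (\<lambda>k. real CARD('k) * blk_inner blk k (h n) w)))))"

text \<open>State after processing the sampled indices xs = [n_1, ..., n_{i-1}],
  starting from w_1 = 0, u^1 = v^1 = 0; its first component is w_i.\<close>
definition vrd_run ::
  "real^'k^'k \<Rightarrow> ('k \<Rightarrow> 'k \<Rightarrow> bool) \<Rightarrow> ('m::finite \<Rightarrow> 'k::finite) \<Rightarrow> nat
   \<Rightarrow> (nat \<Rightarrow> real^'m) \<Rightarrow> (nat \<Rightarrow> real) \<Rightarrow> (real \<Rightarrow> real \<Rightarrow> real)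
   \<Rightarrow> ('k \<Rightarrow> real^'m \<Rightarrow> real^'m) \<Rightarrow> real \<Rightarrow> nat list \<Rightarrow> ('m,'k) vrd_state" where
  "vrd_run A nbr blk N h \<gamma> dQ gr \<mu> xs =
     foldl (vrd_step A nbr blk N h \<gamma> dQ gr \<mu>) (0, (\<lambda>_ _. 0), (\<lambda>_ _. 0)) xs"

text \<open>E ||w_{i,k} - w*_k||^2 where n_1,...,n_{i-1} are i.i.d. uniform on {0..<N}:
  the exact average over all N^(i-1) equally likely index sequences.\<close>
definition vrd_msd ::
  "real^'k^'k \<Rightarrow> ('k \<Rightarrow> 'k \<Rightarrow> bool) \<Rightarrow> ('m::finite \<Rightarrow> 'k::finite) \<Rightarrow> nat
   \<Rightarrow> (nat \<Rightarrow> real^'m) \<Rightarrow> (nat \<Rightarrow> real) \<Rightarrow> (real \<Rightarrow> real \<Rightarrow> real)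
   \<Rightarrow> ('k \<Rightarrow> real^'m \<Rightarrow> real^'m) \<Rightarrow> real \<Rightarrow> real^'m \<Rightarrow> nat \<Rightarrow> 'k \<Rightarrow> real" where
  "vrd_msd A nbr blk N h \<gamma> dQ gr \<mu> wstar i k =
     (\<Sum>xs\<in>{xs. length xs = i - 1 \<and> set xs \<subseteq> {..<N}}.
        blk_sqnorm blk k (fst (vrd_run A nbr blk N h \<gamma> dQ gr \<mu> xs) - wstar))
     / real N ^ (i - 1)"

definition emp_risk ::
  "nat \<Rightarrow> (nat \<Rightarrow> real^'m::finite) \<Rightarrow> (nat \<Rightarrow> real) \<Rightarrow> (real \<Rightarrow> real \<Rightarrow> real)
   \<Rightarrow> ('k::finite \<Rightarrow> real^'m \<Rightarrow> real) \<Rightarrow> real^'m \<Rightarrow> real" where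
  "emp_risk N h \<gamma> Q r w = (1 / real N) * (\<Sum>n<N. Q (h n \<bullet> w) (\<gamma> n)) + (\<Sum>k\<in>UNIV. r k w)"

definition emp_risk_grad ::
  "nat \<Rightarrow> (nat \<Rightarrow> real^'m::finite) \<Rightarrow> (nat \<Rightarrow> real) \<Rightarrow> (real \<Rightarrow> real \<Rightarrow> real)
   \<Rightarrow> ('k::finite \<Rightarrow> real^'m \<Rightarrow> real^'m) \<Rightarrow> real^'m \<Rightarrow> real^'m" where
  "emp_risk_grad N h \<gamma> dQ gr w =
     (1 / real N) *\<^sub>R (\<Sum>n<N. dQ (h n \<bullet> w) (\<gamma> n) *\<^sub>R h n) + (\<Sum>k\<in>UNIV. gr k w)"

end

theory Submission
  imports Defs
begin

text \<open>The analysis follows the paper's Lyapunov argument on an augmented state that also records,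
  for every data index \<open>n\<close>, the iterate \<open>\<phi>\<^sub>n\<close> at which \<open>n\<close> was last sampled.  Three
  quantities are tracked: the distance \<open>X = \<parallel>w - w\<^sup>\<star>\<parallel>\<^sup>2\<close> to the optimum, the spread
  \<open>D = avg\<^sub>n \<parallel>w - \<phi>\<^sub>n\<parallel>\<^sup>2\<close> of the stored iterates, and the deviation \<open>U\<close> of the tables
  \<open>u\<^sub>n\<^sub>,\<^sub>k\<close> from the exact predictions \<open>h\<^sub>n\<^sup>T \<phi>\<^sub>n\<close>.  The gradient step contracts \<open>X\<close>
  by strong convexity, every sampled index refreshes one table entry so \<open>D\<close> and \<open>U\<close> shrink
  by a factor \<open>1 - O(1/N)\<close> on average, and the diffusion step contracts the disagreement
  across agents by \<open>\<lambda>\<close> because it lives in the orthogonal complement of the all-ones vector.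
  For small \<open>\<mu>\<close> a suitable weighting \<open>X + \<mu>\<alpha> D + \<mu>\<beta> U\<close> therefore contracts by the factor
  \<open>\<rho>\<close> in expectation over the sampled index; averaging over all index sequences gives
  the bound.\<close>

section \<open>Contraction of the diffusion step\<close>

lemma inner_matrix_vector_symmetric:
  fixes A :: "real^'k^'k"
  assumes "transpose A = A"
  shows "(A *v x) \<bullet> y = x \<bullet> (A *v y)"
  using dot_lmul_matrix[of x A y] vector_transpose_matrix[of x A] assms by simp

lemma eigenvectors_orthogonal_symmetric:
  fixes A :: "real^'k^'k"
  assumes "transpose A = A" "A *v x = a *\<^sub>R x" "A *v y = b *\<^sub>R y" "a \<noteq> b"
  shows "x \<bullet> y = 0"
proof -
  have "a * (x \<bullet> y) = (A *v x) \<bullet> y" using assms(2) by simp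
  also have "\<dots> = x \<bullet> (A *v y)" by (rule inner_matrix_vector_symmetric[OF assms(1)])
  also have "\<dots> = b * (x \<bullet> y)" using assms(3) by simp
  finally show ?thesis using assms(4) by auto
qed

lemma eigvals_iff: "c \<in> eigvals A \<longleftrightarrow> (\<exists>x. x \<noteq> 0 \<and> A *v x = c *\<^sub>R x)"
  unfolding eigvals_def scalar_mult_eq_scaleR by simp

lemma finite_eigvals_symmetric:
  fixes A :: "real^'k^'k"
  assumes "transpose A = A"
  shows "finite (eigvals A)"
proof -
  define vec_of where "vec_of c = (SOME x. x \<noteq> 0 \<and> A *v x = c *\<^sub>R x)" for c
  have vec_of: "vec_of c \<noteq> 0 \<and> A *v vec_of c = c *\<^sub>R vec_of c" if "c \<in> eigvals A" for c
    using that unfolding eigvals_iff vec_of_def by (rule someI_ex)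
  have inj: "inj_on vec_of (eigvals A)"
  proof (rule inj_onI)
    fix a b assume ab: "a \<in> eigvals A" "b \<in> eigvals A" "vec_of a = vec_of b"
    then have "a *\<^sub>R vec_of a = b *\<^sub>R vec_of a" using vec_of[OF ab(1)] vec_of[OF ab(2)] by metis
    then show "a = b" using vec_of[OF ab(1)] by simp
  qed
  have "pairwise orthogonal (vec_of ` eigvals A)"
  proof (intro pairwise_imageI)
    fix a b assume "a \<in> eigvals A" "b \<in> eigvals A" "vec_of a \<noteq> vec_of b"
    then show "orthogonal (vec_of a) (vec_of b)"
      using vec_of eigenvectors_orthogonal_symmetric[OF assms] unfolding orthogonal_def by metis
  qed
  moreover have "0 \<notin> vec_of ` eigvals A" using vec_of by fastforce
  ultimately have "independent (vec_of ` eigvals A)" by (rule pairwise_orthogonal_independent)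
  then have "finite (vec_of ` eigvals A)" using independent_bound_general by blast
  then show ?thesis using finite_imageD[OF _ inj] by blast
qed

lemma count_eig_mset:
  fixes A :: "real^'k^'k"
  assumes "transpose A = A" "c \<in> eigvals A"
  shows "count (eig_mset A) c = dim {x. A *v x = c *\<^sub>R x}"
proof -
  have "count (eig_mset A) c = (\<Sum>a\<in>eigvals A. if a = c then dim {x. A *v x = a *s x} else 0)"
    unfolding eig_mset_def count_sum by (intro sum.cong) auto
  then show ?thesis
    using finite_eigvals_symmetric[OF assms(1)] assms(2) by (simp add: scalar_mult_eq_scaleR)
qed

lemma eig_mset_count_ge_1:
  fixes A :: "real^'k^'k"
  assumes "transpose A = A" "x \<noteq> 0" "A *v x = c *\<^sub>R x"
  shows "count (eig_mset A) c \<ge> 1"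
proof -
  have c: "c \<in> eigvals A" using assms(2,3) unfolding eigvals_iff by blast
  have "dim {z. A *v z = c *\<^sub>R z} \<ge> 1"
  proof (rule ccontr)
    assume "\<not> ?thesis"
    then have "dim {z. A *v z = c *\<^sub>R z} = 0" by linarith
    then have "{z. A *v z = c *\<^sub>R z} \<subseteq> {0}" by (rule dim_eq_0[THEN iffD1])
    then show False using assms(2,3) by blast
  qed
  then show ?thesis using count_eig_mset[OF assms(1) c] by simp
qed

lemma second_largest_ge_of_submset:
  fixes M :: "real multiset"
  assumes "{#a, b#} \<subseteq># M" "t \<le> a" "t \<le> b"
  defines "l \<equiv> rev (sorted_list_of_multiset M)"
  shows "length l \<ge> 2 \<and> t \<le> l ! 1"
proof -
  have ml: "mset l = M" unfolding l_def by simp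
  have srt: "sorted (rev l)" unfolding l_def by simp
  have "{#a, b#} \<subseteq># filter_mset (\<lambda>x. t \<le> x) M"
    using multiset_filter_mono[OF assms(1), of "\<lambda>x. t \<le> x"] assms(2,3) by simp
  then have "size {#a, b#} \<le> size (filter_mset (\<lambda>x. t \<le> x) M)" by (rule size_mset_mono)
  also have "\<dots> = length (filter (\<lambda>x. t \<le> x) l)" using ml by (metis mset_filter size_mset)
  finally have big: "2 \<le> length (filter (\<lambda>x. t \<le> x) l)" by simp
  then have len: "length l \<ge> 2" using length_filter_le[of "\<lambda>x. t \<le> x" l] by linarith
  show ?thesis
  proof (rule ccontr)
    assume "\<not> ?thesis"
    then have lt: "l ! 1 < t" using len by auto
    have "{i. i < length l \<and> t \<le> l ! i} \<subseteq> {0}"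
    proof
      fix i assume i: "i \<in> {i. i < length l \<and> t \<le> l ! i}"
      have "l ! i \<le> l ! 1" if "1 \<le> i" using sorted_rev_nth_mono[OF srt that] i by simp
      then show "i \<in> {0}" using i lt by (cases i) auto
    qed
    then have "card {i. i < length l \<and> t \<le> l ! i} \<le> card {0::nat}"
      by (intro card_mono) auto
    then show False using big length_filter_conv_card[of "\<lambda>x. t \<le> x" l] by simp
  qed
qed

text \<open>A second eigenvector orthogonal to the all-ones vector \<open>1\<close> contributes a second
  entry \<open>\<ge> min \<bar>c\<bar> 1\<close> to the multiset of absolute eigenvalues (if \<open>c = 1\<close>, the eigenspace of
  \<open>1\<close> has dimension \<open>\<ge> 2\<close>).\<close>
lemma second_largest_abs_eig_ge:
  fixes A :: "real^'k^'k"
  assumes sym: "transpose A = A" and one: "A *v 1 = 1"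
    and x: "x \<noteq> 0" "1 \<bullet> x = 0" "A *v x = c *\<^sub>R x"
  shows "min \<bar>c\<bar> 1 \<le> second_largest_abs_eig A"
proof -
  have one0: "(1 :: real^'k) \<noteq> 0" by (simp add: vec_eq_iff)
  have "{#c, 1#} \<subseteq># eig_mset A"
  proof (cases "c = 1")
    case True
    have ind: "independent {1, x}"
      using x one0 by (intro pairwise_orthogonal_independent)
        (auto simp: pairwise_def orthogonal_def inner_commute)
    have sub: "{1, x} \<subseteq> {z. A *v z = 1 *\<^sub>R z}" using one x True by simp
    have "card {1, x} \<le> dim {z. A *v z = 1 *\<^sub>R z}" by (rule independent_card_le_dim[OF sub ind])
    moreover have "1 \<noteq> x" using x one0 by auto
    moreover have "1 \<in> eigvals A" using one one0 unfolding eigvals_iff by (metis scaleR_one)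
    ultimately have "count (eig_mset A) 1 \<ge> 2" using count_eig_mset[OF sym] by simp
    then show ?thesis using True by (simp add: subseteq_mset_def)
  next
    case False
    then show ?thesis
      using eig_mset_count_ge_1[OF sym x(1,3)] eig_mset_count_ge_1[OF sym one0, of 1] one
      by (simp add: subseteq_mset_def)
  qed
  then have "image_mset abs {#c, 1#} \<subseteq># image_mset abs (eig_mset A)"
    by (rule image_mset_subseteq_mono)
  then have sub: "{#\<bar>c\<bar>, 1#} \<subseteq># image_mset abs (eig_mset A)" by simp
  define l where "l = rev (sorted_list_of_multiset (image_mset abs (eig_mset A)))"
  have "length l \<ge> 2 \<and> min \<bar>c\<bar> 1 \<le> l ! 1"
    unfolding l_def by (rule second_largest_ge_of_submset[OF sub]) simp_all
  moreover have "second_largest_abs_eig A = (if length l < 2 then 0 else l ! 1)"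
    by (simp only: second_largest_abs_eig_def Let_def l_def)
  ultimately show ?thesis by simp
qed

lemma quadratic_nonpos_linear_coeff_eq_0:
  fixes c q :: real
  assumes "\<And>t. 2 * t * c + t^2 * q \<le> 0"
  shows "c = 0"
proof -
  define a where "a = \<bar>q\<bar> + 1"
  have "a > 0" unfolding a_def by simp
  then have "(2 * (c/a) * c + (c/a)^2 * q) * a^2 = c^2 * (2*a + q)"
    by (simp add: field_simps power2_eq_square)
  moreover have "(2 * (c/a) * c + (c/a)^2 * q) * a^2 \<le> 0"
    using assms[of "c/a"] by (simp add: mult_nonpos_nonneg)
  moreover have "2*a + q > 0" unfolding a_def by (simp add: abs_if)
  ultimately have "c^2 \<le> 0" by (simp add: mult_le_0_iff)
  then show ?thesis by simp
qed

text \<open>First-order condition for the maximiser of \<open>\<parallel>A z\<parallel>\<^sup>2 / \<parallel>z\<parallel>\<^sup>2\<close>: along every direction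
  \<open>d \<in> S\<close> the quadratic \<open>t \<mapsto> \<parallel>A (y + t d)\<parallel>\<^sup>2 - s2 \<parallel>y + t d\<parallel>\<^sup>2\<close> is maximal at \<open>t = 0\<close>.\<close>
lemma norm_maximizer_eigenvector_square:
  fixes A :: "real^'k^'k"
  assumes sym: "transpose A = A" and S: "subspace S" and inv: "\<And>z. z \<in> S \<Longrightarrow> A *v z \<in> S"
    and y: "y \<in> S" and le: "\<And>z. z \<in> S \<Longrightarrow> (norm (A *v z))^2 \<le> s2 * (norm z)^2"
    and eq: "(norm (A *v y))^2 = s2 * (norm y)^2"
  shows "A *v (A *v y) = s2 *\<^sub>R y"
proof -
  have crit: "(A *v y) \<bullet> (A *v d) - s2 * (y \<bullet> d) = 0" if d: "d \<in> S" for d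
  proof (rule quadratic_nonpos_linear_coeff_eq_0)
    fix t :: real
    have "y + t *\<^sub>R d \<in> S" using S y d by (simp add: subspace_add subspace_scale)
    then have "(A *v (y + t *\<^sub>R d)) \<bullet> (A *v (y + t *\<^sub>R d)) \<le> s2 * ((y + t *\<^sub>R d) \<bullet> (y + t *\<^sub>R d))"
      using le by (simp only: power2_norm_eq_inner)
    moreover have "(A *v y) \<bullet> (A *v y) = s2 * (y \<bullet> y)" using eq by (simp only: power2_norm_eq_inner)
    ultimately show "2 * t * ((A *v y) \<bullet> (A *v d) - s2 * (y \<bullet> d)) + t^2 * ((A *v d) \<bullet> (A *v d) - s2 * (d \<bullet> d)) \<le> 0"
      by (simp add: matrix_vector_right_distrib matrix_vector_mult_scaleR inner_add_left inner_add_right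
          inner_commute power2_eq_square algebra_simps)
  qed
  define r where "r = A *v (A *v y) - s2 *\<^sub>R y"
  have "r \<in> S" unfolding r_def using S y inv by (simp add: subspace_diff subspace_scale)
  have "r \<bullet> r = (A *v (A *v y)) \<bullet> r - s2 * (y \<bullet> r)" unfolding r_def by (simp add: inner_diff_left)
  also have "\<dots> = 0"
    using crit[OF \<open>r \<in> S\<close>] inner_matrix_vector_symmetric[OF sym, of "A *v y" r] by simp
  finally show ?thesis unfolding r_def by simp
qed

lemma symmetric_norm_attained_by_eigenvalue:
  fixes A :: "real^'k^'k"
  assumes sym: "transpose A = A" and S: "subspace S" and inv: "\<And>z. z \<in> S \<Longrightarrow> A *v z \<in> S"
    and y: "y \<in> S" "y \<noteq> 0"
  obtains x c where "x \<in> S" "x \<noteq> 0" "A *v x = c *\<^sub>R x"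
    "\<And>z. z \<in> S \<Longrightarrow> norm (A *v z) \<le> \<bar>c\<bar> * norm z"
proof -
  define T where "T = S \<inter> sphere 0 1"
  have "compact T" unfolding T_def by (simp add: closed_Int_compact closed_subspace[OF S])
  moreover have "(1 / norm y) *\<^sub>R y \<in> T" unfolding T_def using S y by (simp add: subspace_scale)
  moreover have "continuous_on T (\<lambda>z. norm (A *v z))"
    by (intro continuous_intros matrix_vector_mult_linear_continuous_on)
  ultimately obtain ym where ym: "ym \<in> T" and ymax: "\<And>z. z \<in> T \<Longrightarrow> norm (A *v z) \<le> norm (A *v ym)"
    using continuous_attains_sup[of T "\<lambda>z. norm (A *v z)"] by blast
  define s where "s = norm (A *v ym)"
  have bound: "norm (A *v z) \<le> s * norm z" if "z \<in> S" for z
  proof (cases "z = 0")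
    case False
    have "(1 / norm z) *\<^sub>R z \<in> T" unfolding T_def using S that False by (simp add: subspace_scale)
    from ymax[OF this] False show ?thesis
      unfolding s_def by (simp add: matrix_vector_mult_scaleR field_simps)
  qed simp
  have ymS: "ym \<in> S" "ym \<noteq> 0" using ym unfolding T_def by auto
  have s0: "\<bar>s\<bar> = s" "\<bar>- s\<bar> = s" unfolding s_def by simp_all
  have le: "(norm (A *v z))\<^sup>2 \<le> s\<^sup>2 * (norm z)\<^sup>2" if "z \<in> S" for z
    using bound[OF that] by (metis norm_ge_zero power_mono power_mult_distrib)
  have eq: "(norm (A *v ym))\<^sup>2 = s\<^sup>2 * (norm ym)\<^sup>2" using ym unfolding s_def T_def by simp
  have AAym: "A *v (A *v ym) = s\<^sup>2 *\<^sub>R ym"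
    by (rule norm_maximizer_eigenvector_square[OF sym S inv ymS(1) le eq])
  show thesis
  proof (cases "A *v ym + s *\<^sub>R ym = 0")
    case True
    then have "A *v ym = (- s) *\<^sub>R ym" by (simp add: eq_neg_iff_add_eq_0)
    then show thesis using that[of ym "- s"] ymS bound s0 by auto
  next
    case False
    define v where "v = A *v ym + s *\<^sub>R ym"
    have "A *v v = s *\<^sub>R v"
      unfolding v_def by (simp add: matrix_vector_right_distrib matrix_vector_mult_scaleR AAym
          power2_eq_square algebra_simps)
    moreover have "v \<in> S" unfolding v_def using S inv ymS by (simp add: subspace_add subspace_scale)
    ultimately show thesis using that[of v s] False bound s0 unfolding v_def by auto
  qed
qed

theorem consensus_contraction:
  fixes A :: "real^'k^'k"
  assumes sym: "transpose A = A" and rows: "\<And>l. (\<Sum>k\<in>UNIV. A$l$k) = 1"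
    and lam1: "second_largest_abs_eig A < 1"
    and ysum: "(\<Sum>k\<in>UNIV. y$k) = 0"
  shows "norm (A *v y) \<le> second_largest_abs_eig A * norm y"
proof (cases "y = 0")
  case False
  define S where "S = {z::real^'k. 1 \<bullet> z = 0}"
  have one: "A *v 1 = 1" by (simp add: vec_eq_iff matrix_vector_mult_def rows)
  have inv: "A *v z \<in> S" if "z \<in> S" for z
    using that inner_matrix_vector_symmetric[OF sym, of "1" z] one unfolding S_def by simp
  have "y \<in> S" using ysum unfolding S_def by (simp add: inner_vec_def)
  have S: "subspace S" unfolding S_def by (rule subspace_hyperplane)
  obtain x c where x: "x \<in> S" "x \<noteq> 0" "A *v x = c *\<^sub>R x"
    and bound: "\<And>z. z \<in> S \<Longrightarrow> norm (A *v z) \<le> \<bar>c\<bar> * norm z"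
    using symmetric_norm_attained_by_eigenvalue[OF sym S inv \<open>y \<in> S\<close> False] by blast
  have "1 \<bullet> x = 0" using x(1) unfolding S_def by simp
  from second_largest_abs_eig_ge[OF sym one x(2) this x(3)] lam1
  have "\<bar>c\<bar> \<le> second_largest_abs_eig A" by (auto simp: min_def split: if_splits)
  then have "\<bar>c\<bar> * norm y \<le> second_largest_abs_eig A * norm y" by (simp add: mult_right_mono)
  then show ?thesis using bound[OF \<open>y \<in> S\<close>] by linarith
qed simp

lemma norm_vec_sq: "(norm (x::real^'n))^2 = (\<Sum>j\<in>UNIV. (x$j)^2)"
  by (simp only: power2_norm_eq_inner inner_vec_def) (simp add: power2_eq_square)

lemma norm_add_sq_le_weighted: "(norm (x + y::'a::real_normed_vector))^2 \<le> (1 + t) * (norm x)^2 + (1 + 1/t) * (norm y)^2"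
  if "t > 0" for t :: real
proof -
  have "(norm (x + y))^2 \<le> (norm x + norm y)^2"
    by (simp add: norm_triangle_ineq power_mono)
  also have "\<dots> \<le> (1 + t) * (norm x)^2 + (1 + 1/t) * (norm y)^2"
  proof -
    have "0 \<le> (t * norm x - norm y)^2 / t" using that by simp
    also have "(t * norm x - norm y)^2 / t = t * (norm x)^2 - 2 * norm x * norm y + (norm y)^2 / t"
      using that by (simp add: field_simps power2_eq_square)
    finally show ?thesis by (simp add: power2_eq_square algebra_simps add_divide_distrib)
  qed
  finally show ?thesis .
qed

lemma sq_sum_le: "(x + y)^2 \<le> 2 * x^2 + 2 * (y::real)^2"
  using norm_add_sq_le_weighted[of 1 x y] by simp

lemma sq_sum3_le: "(a + b + c)^2 \<le> 3 * a^2 + 3 * b^2 + 3 * (c::real)^2"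
proof -
  have "3 * a^2 + 3 * b^2 + 3 * c^2 - (a + b + c)^2 = (a - b)^2 + (b - c)^2 + (a - c)^2"
    by (simp add: power2_eq_square algebra_simps)
  also have "\<dots> \<ge> 0" by simp
  finally show ?thesis by simp
qed

lemma norm_add3_sq_le:
  "(norm (x + y + z::'a::real_normed_vector))^2 \<le> 3 * (norm x)^2 + 3 * (norm y)^2 + 3 * (norm z)^2"
proof -
  have "norm (x + y + z) \<le> norm x + norm y + norm z"
    by (metis norm_triangle_ineq order_trans add_right_mono)
  then have "(norm (x + y + z))^2 \<le> (norm x + norm y + norm z)^2" by (simp add: power_mono)
  also have "\<dots> \<le> 3 * (norm x)^2 + 3 * (norm y)^2 + 3 * (norm z)^2" by (rule sq_sum3_le)
  finally show ?thesis .
qed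

lemma contraction_split_le:
  fixes l a b :: real
  assumes "0 < l" "l < 1"
  shows "l^2 * (a + b)^2 \<le> l * a^2 + b^2 / (1 - l)"
proof -
  have "(1 - l) * (l * a^2 + b^2 / (1 - l)) - (1 - l) * (l^2 * (a + b)^2)
        = l * ((1 - l) * a - l * b)^2 + b^2 * (1 - l^2)"
    using assms by (simp add: field_simps power2_eq_square)
  also have "\<dots> \<ge> 0" using assms by (intro add_nonneg_nonneg mult_nonneg_nonneg) (auto simp: power_le_one abs_square_le_1)
  finally have "(1 - l) * (l^2 * (a + b)^2) \<le> (1 - l) * (l * a^2 + b^2 / (1 - l))" by simp
  then show ?thesis using assms by simp
qed

lemma norm_average_sq_le:
  fixes f :: "nat \<Rightarrow> 'a::real_normed_vector"
  assumes "N > 0"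
  shows "(norm ((1 / real N) *\<^sub>R (\<Sum>m<N. f m)))^2 \<le> (1 / real N) * (\<Sum>m<N. (norm (f m))^2)"
proof -
  have "norm (\<Sum>m<N. f m) \<le> (\<Sum>m<N. norm (f m))" by (rule norm_sum)
  then have "(norm (\<Sum>m<N. f m))^2 \<le> (\<Sum>m<N. norm (f m))^2" by (simp add: power_mono)
  also have "\<dots> \<le> (\<Sum>m<N. (norm (f m))^2) * real N"
    using sum_squared_le_sum_of_squares[of "\<lambda>m. norm (f m)" "{..<N}"] by simp
  finally have *: "(norm (\<Sum>m<N. f m))^2 \<le> (\<Sum>m<N. (norm (f m))^2) * real N" .
  have "(norm ((1 / real N) *\<^sub>R (\<Sum>m<N. f m)))^2 = (norm (\<Sum>m<N. f m))^2 / (real N)^2"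
    by (simp add: power_divide)
  also have "\<dots> \<le> (\<Sum>m<N. (norm (f m))^2) * real N / (real N)^2"
    using * by (simp add: divide_right_mono)
  also have "\<dots> = (1 / real N) * (\<Sum>m<N. (norm (f m))^2)"
    using assms by (simp add: power2_eq_square)
  finally show ?thesis .
qed

lemma sum_sq_dist_average_le:
  fixes f :: "nat \<Rightarrow> 'a::real_inner"
  assumes "N > 0"
  shows "(\<Sum>n<N. (norm (f n - (1 / real N) *\<^sub>R (\<Sum>m<N. f m)))^2) \<le> (\<Sum>n<N. (norm (f n))^2)"
proof -
  define c where "c = (1 / real N) *\<^sub>R (\<Sum>m<N. f m)"
  have sc: "(\<Sum>m<N. f m) = real N *\<^sub>R c" unfolding c_def using assms by simp
  have "(\<Sum>n<N. (norm (f n - c))^2) = (\<Sum>n<N. (norm (f n))^2 - 2 * (f n \<bullet> c) + (norm c)^2)"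
    by (intro sum.cong refl) (simp add: power2_norm_eq_inner inner_diff_left inner_diff_right inner_commute algebra_simps)
  also have "\<dots> = (\<Sum>n<N. (norm (f n))^2) - 2 * ((\<Sum>n<N. f n) \<bullet> c) + real N * (norm c)^2"
    by (simp add: sum.distrib sum_subtractf inner_sum_left sum_distrib_left)
  also have "\<dots> = (\<Sum>n<N. (norm (f n))^2) - real N * (norm c)^2"
    unfolding sc by (simp add: power2_norm_eq_inner)
  also have "\<dots> \<le> (\<Sum>n<N. (norm (f n))^2)" by simp
  finally show ?thesis unfolding c_def .
qed

lemma weighted_sum_contraction:
  fixes X D U Xn Dn Uq a b \<rho> cXX cXD cXU cDX cDD cDU cUD cUU :: real
  assumes "Xn \<le> cXX*X + cXD*D + cXU*U" "Dn \<le> cDX*X + cDD*D + cDU*U" "Uq \<le> cUD*D + cUU*U"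
    "a \<ge> 0" "b \<ge> 0" "X \<ge> 0" "D \<ge> 0" "U \<ge> 0"
    "cXX + a*cDX \<le> \<rho>" "cXD + a*cDD + b*cUD \<le> \<rho>*a" "cXU + a*cDU + b*cUU \<le> \<rho>*b"
  shows "Xn + a*Dn + b*Uq \<le> \<rho>*(X + a*D + b*U)"
proof -
  have "a*Dn \<le> a*(cDX*X + cDD*D + cDU*U)" by (rule mult_left_mono) (use assms in auto)
  moreover have "b*Uq \<le> b*(cUD*D + cUU*U)" by (rule mult_left_mono) (use assms in auto)
  ultimately have "Xn + a*Dn + b*Uq \<le> cXX*X + cXD*D + cXU*U + a*(cDX*X + cDD*D + cDU*U) + b*(cUD*D + cUU*U)"
    using assms(1) by linarith
  also have "\<dots> = (cXX + a*cDX)*X + (cXD + a*cDD + b*cUD)*D + (cXU + a*cDU + b*cUU)*U"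
    by (simp add: algebra_simps)
  also have "\<dots> \<le> \<rho>*X + (\<rho>*a)*D + (\<rho>*b)*U"
    using assms(6-11) by (intro add_mono mult_right_mono) auto
  finally show ?thesis by (simp add: algebra_simps)
qed

lemma add_mult_le_mult_add:
  fixes a b x y :: real
  assumes "0 \<le> a" "0 \<le> b" "0 \<le> x" "0 \<le> y"
  shows "a * x + b * y \<le> (a + b) * (x + y)"
  using assms by (simp add: algebra_simps)

lemma sum_norm_sq_diff_centered:
  fixes xi :: "'i \<Rightarrow> 'a::real_inner"
  assumes "(\<Sum>n\<in>I. xi n) = 0"
  shows "(\<Sum>n\<in>I. (norm (a - c *\<^sub>R xi n))^2) = real (card I) * (norm a)^2 + c^2 * (\<Sum>n\<in>I. (norm (xi n))^2)"
proof -
  have "(norm (a - c *\<^sub>R xi n))^2 = (norm a)^2 - 2 * c * (a \<bullet> xi n) + c^2 * (norm (xi n))^2" for n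
    by (simp only: power2_norm_eq_inner)
      (simp add: inner_diff_left inner_diff_right inner_commute algebra_simps power2_eq_square)
  then have "(\<Sum>n\<in>I. (norm (a - c *\<^sub>R xi n))^2)
      = real (card I) * (norm a)^2 - 2 * c * (a \<bullet> (\<Sum>n\<in>I. xi n)) + c^2 * (\<Sum>n\<in>I. (norm (xi n))^2)"
    by (simp add: sum.distrib sum_subtractf sum_distrib_left inner_sum_right)
  then show ?thesis using assms by simp
qed

lemma young_factor_le:
  fixes t s :: real
  assumes "0 < t" "t \<le> 1" "0 \<le> s"
  shows "(1 + t) * (1 - 2 * t + s) \<le> 1 - t + 2 * s"
proof -
  have "(1 + t) * (1 - 2 * t + s) = 1 - t - 2 * t^2 + s + t * s" by (simp add: algebra_simps power2_eq_square)
  also have "\<dots> \<le> 1 - t + 2 * s" using assms mult_left_le_one_le[of s t] by (smt (verit) zero_le_power2)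
  finally show ?thesis .
qed

lemma blk_inner_diff: "blk_inner blk k h (x - y) = blk_inner blk k h x - blk_inner blk k h y"
  unfolding blk_inner_def by (simp add: algebra_simps sum_subtractf)

lemma inner_eq_sum_blk_inner:
  fixes blk :: "'m::finite \<Rightarrow> 'k::finite"
  shows "h \<bullet> w = (\<Sum>k\<in>UNIV. blk_inner blk k h w)"
proof -
  have "h \<bullet> w = (\<Sum>j\<in>UNIV. h$j * w$j)" by (simp add: inner_vec_def)
  also have "\<dots> = (\<Sum>k\<in>UNIV. \<Sum>j\<in>{j\<in>UNIV. blk j = k}. h$j * w$j)"
    by (rule sum.group[symmetric]) auto
  finally show ?thesis unfolding blk_inner_def by simp
qed

lemma blk_inner_sq_le:
  fixes blk :: "'m::finite \<Rightarrow> 'k::finite"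
  shows "(blk_inner blk k h d)^2 \<le> (norm h)^2 * (norm d)^2"
proof -
  have "(blk_inner blk k h d)^2 \<le> (\<Sum>j\<in>{j. blk j = k}. (h$j)^2) * (\<Sum>j\<in>{j. blk j = k}. (d$j)^2)"
    unfolding blk_inner_def by (rule Cauchy_Schwarz_ineq_sum)
  also have "\<dots> \<le> (\<Sum>j\<in>UNIV. (h$j)^2) * (\<Sum>j\<in>UNIV. (d$j)^2)"
    by (intro mult_mono sum_mono2) (auto intro: sum_nonneg)
  finally show ?thesis by (simp add: norm_vec_sq)
qed

lemma blk_sqnorm_le_norm_sq:
  fixes blk :: "'m::finite \<Rightarrow> 'k::finite"
  shows "blk_sqnorm blk k d \<le> (norm d)^2"
  unfolding blk_sqnorm_def norm_vec_sq by (intro sum_mono2) auto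

lemma norm_blockwise_scale_sq_le:
  fixes blk :: "'m::finite \<Rightarrow> 'k::finite"
  shows "(norm (\<chi> j. c (blk j) * (v::real^'m)$j))^2 \<le> (\<Sum>k\<in>UNIV. (c k)^2) * (norm v)^2"
proof -
  have "(norm (\<chi> j. c (blk j) * v$j))^2 = (\<Sum>j\<in>UNIV. (c (blk j))^2 * (v$j)^2)"
    by (simp add: norm_vec_sq power_mult_distrib)
  also have "\<dots> \<le> (\<Sum>j\<in>UNIV. (\<Sum>k\<in>UNIV. (c k)^2) * (v$j)^2)"
  proof (intro sum_mono mult_right_mono)
    fix j show "(c (blk j))^2 \<le> (\<Sum>k\<in>UNIV. (c k)^2)"
      by (rule member_le_sum) auto
  qed auto
  also have "\<dots> = (\<Sum>k\<in>UNIV. (c k)^2) * (norm v)^2"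
    by (simp add: norm_vec_sq sum_distrib_left)
  finally show ?thesis .
qed

lemma norm_block_mismatch_sq_le:
  fixes blk :: "'m::finite \<Rightarrow> 'k::finite"
  shows "(norm (\<chi> l. real CARD('k) * blk_inner blk l h d - h \<bullet> d))^2
           \<le> (2 * real CARD('k)^3 + 2 * real CARD('k)) * (norm h)^2 * (norm d)^2"
proof -
  let ?K = "real CARD('k)"
  have hd: "(h \<bullet> d)^2 \<le> (norm h)^2 * (norm d)^2"
    using Cauchy_Schwarz_ineq[of h d] by (simp add: power2_norm_eq_inner)
  have "(?K * blk_inner blk l h d - h \<bullet> d)^2 \<le> 2 * ?K^2 * ((norm h)^2 * (norm d)^2) + 2 * ((norm h)^2 * (norm d)^2)"
    for l
  proof -
    have "(?K * blk_inner blk l h d - h \<bullet> d)^2 \<le> 2 * (?K * blk_inner blk l h d)^2 + 2 * (h \<bullet> d)^2"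
      using sq_sum_le[of "?K * blk_inner blk l h d" "- (h \<bullet> d)"] by simp
    moreover have "(?K * blk_inner blk l h d)^2 \<le> ?K^2 * ((norm h)^2 * (norm d)^2)"
      using mult_left_mono[OF blk_inner_sq_le[of blk l h d], of "?K^2"] by (simp add: power_mult_distrib)
    ultimately show ?thesis using hd by linarith
  qed
  then have "(\<Sum>l\<in>UNIV. (?K * blk_inner blk l h d - h \<bullet> d)^2)
      \<le> (\<Sum>l\<in>(UNIV::'k set). 2 * ?K^2 * ((norm h)^2 * (norm d)^2) + 2 * ((norm h)^2 * (norm d)^2))"
    by (rule sum_mono)
  also have "\<dots> = (2 * ?K^3 + 2 * ?K) * (norm h)^2 * (norm d)^2"
    by (simp add: algebra_simps power2_eq_square power3_eq_cube)
  finally show ?thesis by (simp add: norm_vec_sq)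
qed

lemma blockwise_gradient_component:
  fixes r :: "'k \<Rightarrow> real^'m::finite \<Rightarrow> real" and blk :: "'m \<Rightarrow> 'k"
  assumes r_block: "\<And>k w w'. (\<And>j. blk j = k \<Longrightarrow> w$j = w'$j) \<Longrightarrow> r k w = r k w'"
    and r_deriv: "\<And>k w. (r k has_derivative (\<lambda>x. gr k w \<bullet> x)) (at w)"
    and j: "blk j \<noteq> k"
  shows "gr k w $ j = 0"
proof -
  define e :: "real^'m" where "e = axis j 1"
  have d1: "((\<lambda>t::real. w + t *\<^sub>R e) has_derivative (\<lambda>t. t *\<^sub>R e)) (at 0)"
    by (auto intro!: derivative_eq_intros)
  have "((\<lambda>t::real. r k (w + t *\<^sub>R e)) has_derivative (\<lambda>t. gr k w \<bullet> (t *\<^sub>R e))) (at 0)"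
    using has_derivative_compose[OF d1, of "r k" "\<lambda>x. gr k w \<bullet> x"] r_deriv by simp
  moreover have "(\<lambda>t::real. r k (w + t *\<^sub>R e)) = (\<lambda>t. r k w)"
  proof
    fix t :: real
    show "r k (w + t *\<^sub>R e) = r k w"
      by (rule r_block) (use j in \<open>auto simp: e_def axis_def\<close>)
  qed
  ultimately have "((\<lambda>t::real. r k w) has_derivative (\<lambda>t. gr k w \<bullet> (t *\<^sub>R e))) (at 0)" by simp
  moreover have "((\<lambda>t::real. r k w) has_derivative (\<lambda>t. 0)) (at 0)" by (rule has_derivative_const)
  ultimately have "(\<lambda>t. gr k w \<bullet> (t *\<^sub>R e)) = (\<lambda>t::real. 0)" by (rule has_derivative_unique)
  then have "gr k w \<bullet> (1 *\<^sub>R e) = 0" by meson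
  then show ?thesis by (simp add: e_def inner_axis)
qed

lemma sum_blockwise_gradient_component:
  fixes r :: "'k::finite \<Rightarrow> real^'m::finite \<Rightarrow> real" and blk :: "'m \<Rightarrow> 'k"
  assumes r_block: "\<And>k w w'. (\<And>j. blk j = k \<Longrightarrow> w$j = w'$j) \<Longrightarrow> r k w = r k w'"
    and r_deriv: "\<And>k w. (r k has_derivative (\<lambda>x. gr k w \<bullet> x)) (at w)"
  shows "(\<Sum>k\<in>UNIV. gr k w) $ j = gr (blk j) w $ j"
proof -
  have "(\<Sum>k\<in>UNIV. gr k w) $ j = (\<Sum>k\<in>UNIV. gr k w $ j)" by (simp add: sum_component)
  also have "\<dots> = gr (blk j) w $ j"
  proof -
    have "(\<Sum>k\<in>UNIV. gr k w $ j) = gr (blk j) w $ j + (\<Sum>k\<in>UNIV - {blk j}. gr k w $ j)"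
      by (rule sum.remove) auto
    moreover have "(\<Sum>k\<in>UNIV - {blk j}. gr k w $ j) = 0"
      by (rule sum.neutral) (auto intro: blockwise_gradient_component[OF r_block r_deriv])
    ultimately show ?thesis by simp
  qed
  finally show ?thesis .
qed

section \<open>Linear convergence of the recursion\<close>

type_synonym ('m,'k) aug_state = "('m,'k) vrd_state \<times> (nat \<Rightarrow> real^'m)"

locale vrd =
  fixes N :: nat
    and h :: "nat \<Rightarrow> real^'m::finite"
    and \<gamma> :: "nat \<Rightarrow> real"
    and blk :: "'m \<Rightarrow> 'k::finite"
    and Q dQ :: "real \<Rightarrow> real \<Rightarrow> real"
    and r :: "'k \<Rightarrow> real^'m \<Rightarrow> real"
    and gr :: "'k \<Rightarrow> real^'m \<Rightarrow> real^'m"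
    and A :: "real^'k^'k"
    and nbr :: "'k \<Rightarrow> 'k \<Rightarrow> bool"
    and L \<delta> \<eta> \<nu> lam :: real
    and wstar :: "real^'m"
  assumes N_pos: "N \<ge> 1"
    and Q_deriv: "\<And>z g. ((\<lambda>x. Q x g) has_real_derivative dQ z g) (at z)"
    and L_pos: "L > 0" and delta_pos: "\<delta> > 0"
    and Q_lip: "\<And>n w1 w2. n < N \<Longrightarrow>
        norm (dQ (h n \<bullet> w1) (\<gamma> n) *\<^sub>R h n - dQ (h n \<bullet> w2) (\<gamma> n) *\<^sub>R h n) \<le> L * norm (w1 - w2)"
    and dQ_lip: "\<And>n z1 z2. n < N \<Longrightarrow> \<bar>dQ z1 (\<gamma> n) - dQ z2 (\<gamma> n)\<bar> \<le> \<delta> * \<bar>z1 - z2\<bar>"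
    and r_block: "\<And>k w w'. (\<And>j. blk j = k \<Longrightarrow> w$j = w'$j) \<Longrightarrow> r k w = r k w'"
    and r_deriv: "\<And>k w. (r k has_derivative (\<lambda>x. gr k w \<bullet> x)) (at w)"
    and r_lip: "\<And>w1 w2. norm ((\<Sum>k\<in>UNIV. gr k w1) - (\<Sum>k\<in>UNIV. gr k w2)) \<le> \<eta> * norm (w1 - w2)"
    and nu_pos: "\<nu> > 0"
    and R_strong: "\<And>w1 w2. (emp_risk_grad N h \<gamma> dQ gr w1 - emp_risk_grad N h \<gamma> dQ gr w2) \<bullet> (w1 - w2)
                      \<ge> \<nu> * (norm (w1 - w2))^2"
    and wstar_min: "\<And>w. emp_risk N h \<gamma> Q r wstar \<le> emp_risk N h \<gamma> Q r w"
    and A_nonneg: "\<And>l k. A$l$k \<ge> 0"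
    and A_support: "\<And>l k. A$l$k > 0 \<Longrightarrow> l = k \<or> nbr l k"
    and A_sym: "transpose A = A"
    and A_stoch: "\<And>l. (\<Sum>k\<in>UNIV. A$l$k) = 1"
    and lam_eq: "lam = second_largest_abs_eig A"
    and lam_range: "0 < lam" "lam < 1"
begin

abbreviation "risk_grad \<equiv> emp_risk_grad N h \<gamma> dQ gr"

abbreviation "blk_in \<equiv> blk_inner blk"

lemma N_gt_0: "real N > 0" using N_pos by simp

lemma eta_nonneg: "\<eta> \<ge> 0"
proof -
  define x :: "real^'m" where "x = vec 1"
  have x0: "x \<noteq> 0" unfolding x_def by (simp add: vec_eq_iff)
  have "norm ((\<Sum>k\<in>UNIV. gr k x) - (\<Sum>k\<in>UNIV. gr k 0)) \<le> \<eta> * norm (x - 0)"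
    by (rule r_lip)
  then have "0 \<le> \<eta> * norm x" by (smt (verit) diff_zero norm_ge_zero)
  moreover have "norm x > 0" using x0 by simp
  ultimately show ?thesis by (simp add: zero_le_mult_iff)
qed

lemma risk_grad_lipschitz: "norm (risk_grad w1 - risk_grad w2) \<le> (L + \<eta>) * norm (w1 - w2)"
proof -
  have "risk_grad w1 - risk_grad w2 = (1 / real N) *\<^sub>R (\<Sum>n<N. dQ (h n \<bullet> w1) (\<gamma> n) *\<^sub>R h n - dQ (h n \<bullet> w2) (\<gamma> n) *\<^sub>R h n)
        + ((\<Sum>k\<in>UNIV. gr k w1) - (\<Sum>k\<in>UNIV. gr k w2))"
    unfolding emp_risk_grad_def by (simp add: sum_subtractf algebra_simps)
  also have "norm \<dots> \<le> norm ((1 / real N) *\<^sub>R (\<Sum>n<N. dQ (h n \<bullet> w1) (\<gamma> n) *\<^sub>R h n - dQ (h n \<bullet> w2) (\<gamma> n) *\<^sub>R h n))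
        + \<eta> * norm (w1 - w2)"
    using r_lip[of w1 w2] norm_triangle_ineq by (smt (verit))
  also have "norm ((1 / real N) *\<^sub>R (\<Sum>n<N. dQ (h n \<bullet> w1) (\<gamma> n) *\<^sub>R h n - dQ (h n \<bullet> w2) (\<gamma> n) *\<^sub>R h n))
      \<le> (1 / real N) * (\<Sum>n<N. L * norm (w1 - w2))"
  proof -
    have "norm (\<Sum>n<N. dQ (h n \<bullet> w1) (\<gamma> n) *\<^sub>R h n - dQ (h n \<bullet> w2) (\<gamma> n) *\<^sub>R h n)
        \<le> (\<Sum>n<N. L * norm (w1 - w2))"
      by (rule order_trans[OF norm_sum sum_mono]) (use Q_lip in auto)
    then show ?thesis using N_gt_0 by (simp add: pos_divide_le_eq mult.commute)
  qed
  also have "(1 / real N) * (\<Sum>n<N. L * norm (w1 - w2)) = L * norm (w1 - w2)" using N_gt_0 by simp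
  finally show ?thesis by (simp add: algebra_simps)
qed

lemma has_derivative_emp_risk: "(emp_risk N h \<gamma> Q r has_derivative (\<lambda>x. risk_grad w \<bullet> x)) (at w)"
proof -
  have dQn: "((\<lambda>w. Q (h n \<bullet> w) (\<gamma> n)) has_derivative (\<lambda>x. dQ (h n \<bullet> w) (\<gamma> n) * (h n \<bullet> x))) (at w)" for n
  proof -
    have d1: "((\<lambda>w. h n \<bullet> w) has_derivative (\<lambda>x. h n \<bullet> x)) (at w)"
      by (rule bounded_linear.has_derivative[OF bounded_linear_inner_right has_derivative_ident])
    have d2: "((\<lambda>x. Q x (\<gamma> n)) has_derivative (\<lambda>x. dQ (h n \<bullet> w) (\<gamma> n) * x)) (at (h n \<bullet> w))"
      using Q_deriv[where z = "h n \<bullet> w" and g = "\<gamma> n"] by (simp add: has_field_derivative_def)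
    show ?thesis using has_derivative_compose[OF d1 d2] by simp
  qed
  have "((\<lambda>w. (1 / real N) * (\<Sum>n<N. Q (h n \<bullet> w) (\<gamma> n)) + (\<Sum>k\<in>UNIV. r k w)) has_derivative
      (\<lambda>x. (1 / real N) * (\<Sum>n<N. dQ (h n \<bullet> w) (\<gamma> n) * (h n \<bullet> x)) + (\<Sum>k\<in>UNIV. gr k w \<bullet> x))) (at w)"
    by (intro has_derivative_add has_derivative_mult_right has_derivative_sum dQn r_deriv)
  moreover have "(\<lambda>x. (1 / real N) * (\<Sum>n<N. dQ (h n \<bullet> w) (\<gamma> n) * (h n \<bullet> x)) + (\<Sum>k\<in>UNIV. gr k w \<bullet> x))
      = (\<lambda>x. risk_grad w \<bullet> x)"
    unfolding emp_risk_grad_def by (simp add: inner_add_left inner_sum_left)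
  ultimately show ?thesis unfolding emp_risk_def by simp
qed

lemma risk_grad_wstar: "risk_grad wstar = 0"
proof -
  have "(\<lambda>x. risk_grad wstar \<bullet> x) = (\<lambda>h. 0)"
    by (rule has_derivative_local_min[OF has_derivative_emp_risk]) (simp add: wstar_min always_eventually)
  then have "risk_grad wstar \<bullet> risk_grad wstar = 0" by meson
  then show ?thesis by simp
qed

lemma norm_risk_grad_le: "norm (risk_grad w) \<le> (L + \<eta>) * norm (w - wstar)"
  using risk_grad_lipschitz[of w wstar] risk_grad_wstar by simp

lemma norm_risk_grad_sq_le: "(norm (risk_grad w))^2 \<le> (L + \<eta>)^2 * (norm (w - wstar))^2"
  using norm_risk_grad_le[of w] by (metis norm_ge_zero power_mono power_mult_distrib)

lemma gradient_step_contraction: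
  "(norm (w - wstar - \<mu> *\<^sub>R risk_grad w))^2 \<le> (1 - 2 * \<mu> * \<nu> + \<mu>^2 * (L + \<eta>)^2) * (norm (w - wstar))^2"
  if "\<mu> \<ge> 0"
proof -
  let ?d = "w - wstar" and ?g = "risk_grad w"
  have sc: "?g \<bullet> ?d \<ge> \<nu> * (norm ?d)^2" using R_strong[of w wstar] risk_grad_wstar by simp
  have gb: "(norm ?g)^2 \<le> (L + \<eta>)^2 * (norm ?d)^2"
    using norm_risk_grad_le[of w] by (metis norm_ge_zero power_mono power_mult_distrib)
  have "(norm (?d - \<mu> *\<^sub>R ?g))^2 = (?d - \<mu> *\<^sub>R ?g) \<bullet> (?d - \<mu> *\<^sub>R ?g)"
    by (simp only: power2_norm_eq_inner)
  also have "\<dots> = ?d \<bullet> ?d - 2 * \<mu> * (?g \<bullet> ?d) + \<mu>^2 * (?g \<bullet> ?g)"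
    by (simp add: inner_diff_left inner_diff_right inner_commute algebra_simps power2_eq_square)
  also have "\<dots> = (norm ?d)^2 - 2 * \<mu> * (?g \<bullet> ?d) + \<mu>^2 * (norm ?g)^2"
    by (simp only: power2_norm_eq_inner)
  also have "\<dots> \<le> (norm ?d)^2 - 2 * \<mu> * (\<nu> * (norm ?d)^2) + \<mu>^2 * ((L + \<eta>)^2 * (norm ?d)^2)"
    using sc gb that by (intro add_mono diff_mono mult_left_mono) auto
  finally show ?thesis by (simp add: algebra_simps)
qed

lemma sum_reg_grad_component: "(\<Sum>k\<in>UNIV. gr k w) $ j = gr (blk j) w $ j"
  by (rule sum_blockwise_gradient_component[where r=r and blk=blk, OF r_block r_deriv])

subsection \<open>The augmented state\<close>

text \<open>The second component \<open>snap S n\<close> of an augmented state is the iterate \<open>\<phi>\<^sub>n\<close> at which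
  index \<open>n\<close> was last sampled.  It is ghost data: it never influences the \<open>VRD\<^sup>2\<close> iterates.\<close>

definition aug_step :: "real \<Rightarrow> ('m,'k) aug_state \<Rightarrow> nat \<Rightarrow> ('m,'k) aug_state" where
  "aug_step \<mu> S n = (vrd_step A nbr blk N h \<gamma> dQ gr \<mu> (fst S) n, (snd S)(n := fst (fst S)))"

definition aug_init :: "('m,'k) aug_state" where
  "aug_init = ((0, (\<lambda>_ _. 0), (\<lambda>_ _. 0)), (\<lambda>_. 0))"

definition aug_run :: "real \<Rightarrow> nat list \<Rightarrow> ('m,'k) aug_state" where
  "aug_run \<mu> xs = foldl (aug_step \<mu>) aug_init xs"

lemma fst_foldl_aug_step: "fst (foldl (aug_step \<mu>) S xs) = foldl (vrd_step A nbr blk N h \<gamma> dQ gr \<mu>) (fst S) xs"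
  by (induction xs arbitrary: S) (auto simp: aug_step_def)

lemma fst_aug_run: "fst (fst (aug_run \<mu> xs)) = fst (vrd_run A nbr blk N h \<gamma> dQ gr \<mu> xs)"
  unfolding aug_run_def vrd_run_def using fst_foldl_aug_step[of \<mu> aug_init xs] by (simp add: aug_init_def)

definition iter_w :: "('m,'k) aug_state \<Rightarrow> real^'m" where "iter_w S = fst (fst S)"

definition tab_u :: "('m,'k) aug_state \<Rightarrow> nat \<Rightarrow> 'k \<Rightarrow> real" where "tab_u S = fst (snd (fst S))"

definition tab_v :: "('m,'k) aug_state \<Rightarrow> nat \<Rightarrow> 'k \<Rightarrow> real" where "tab_v S = snd (snd (fst S))"

definition snap :: "('m,'k) aug_state \<Rightarrow> nat \<Rightarrow> real^'m" where "snap S = snd S"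

lemma fst_aug_state: "fst S = (iter_w S, tab_u S, tab_v S)"
  by (simp add: iter_w_def tab_u_def tab_v_def)

definition msg :: "('m,'k) aug_state \<Rightarrow> nat \<Rightarrow> 'k \<Rightarrow> real" where
  "msg S n l = tab_u S n l + real CARD('k) * blk_in l (h n) (iter_w S) - tab_v S n l"

definition comb :: "('m,'k) aug_state \<Rightarrow> nat \<Rightarrow> 'k \<Rightarrow> real" where
  "comb S n k = vrd_z A nbr blk h n (fst S) k"

definition direction :: "('m,'k) aug_state \<Rightarrow> nat \<Rightarrow> real^'m" where
  "direction S n = (\<chi> j. (dQ (comb S n (blk j)) (\<gamma> n) - dQ (tab_u S n (blk j)) (\<gamma> n)) * (h n)$j
                         + (1 / real N) * (\<Sum>m<N. dQ (tab_u S m (blk j)) (\<gamma> m) * (h m)$j)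
                         + (gr (blk j) (iter_w S))$j)"

lemma A_outside_support: "\<not> (l = k \<or> nbr l k) \<Longrightarrow> A$l$k = 0"
  using A_nonneg[of l k] A_support[of l k] by linarith

lemma A_entry_sym: "A$l$k = A$k$l"
  using A_sym by (metis transpose_def vec_lambda_beta)

lemma A_col_sum: "(\<Sum>l\<in>UNIV. A$l$k) = 1"
  using A_stoch[of k] by (simp add: A_entry_sym)

lemma comb_eq_sum: "comb S n k = (\<Sum>l\<in>UNIV. A$l$k * msg S n l)"
proof -
  have "comb S n k = (\<Sum>l\<in>{l. l = k \<or> nbr l k}. A$l$k * msg S n l)"
    unfolding comb_def vrd_z_def msg_def by (subst fst_aug_state) simp
  also have "\<dots> = (\<Sum>l\<in>UNIV. A$l$k * msg S n l)"
    by (rule sum.mono_neutral_left) (auto simp: A_outside_support)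
  finally show ?thesis .
qed

lemma sum_comb: "(\<Sum>k\<in>UNIV. comb S n k) = (\<Sum>l\<in>UNIV. msg S n l)"
proof -
  have "(\<Sum>k\<in>UNIV. comb S n k) = (\<Sum>k\<in>UNIV. \<Sum>l\<in>UNIV. A$l$k * msg S n l)" by (simp add: comb_eq_sum)
  also have "\<dots> = (\<Sum>l\<in>UNIV. \<Sum>k\<in>UNIV. A$l$k * msg S n l)" by (rule sum.swap)
  also have "\<dots> = (\<Sum>l\<in>UNIV. msg S n l)" by (simp add: sum_distrib_right[symmetric] A_stoch)
  finally show ?thesis .
qed

lemma iter_w_aug_step: "iter_w (aug_step \<mu> S n) = iter_w S - \<mu> *\<^sub>R direction S n"
  unfolding aug_step_def vrd_step_def
  by (subst fst_aug_state) (simp add: iter_w_def direction_def comb_def Let_def vec_eq_iff algebra_simps fst_aug_state[symmetric])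

lemma tab_u_aug_step: "tab_u (aug_step \<mu> S n) = (tab_u S)(n := comb S n)"
  unfolding aug_step_def vrd_step_def
  by (subst fst_aug_state) (simp add: tab_u_def comb_def Let_def fst_aug_state[symmetric] fun_eq_iff)

lemma tab_v_aug_step: "tab_v (aug_step \<mu> S n) = (tab_v S)(n := (\<lambda>k. real CARD('k) * blk_in k (h n) (iter_w S)))"
  unfolding aug_step_def vrd_step_def
  by (subst fst_aug_state) (simp add: tab_v_def Let_def)

lemma snap_aug_step: "snap (aug_step \<mu> S n) = (snap S)(n := iter_w S)"
  unfolding aug_step_def by (simp add: snap_def iter_w_def)

text \<open>Both conjuncts are preserved by \<open>aug_step\<close>, the second because \<open>A\<close> is doubly
  stochastic.  Together they make the disagreement vector of the diffusion step sum to zero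
  (\<open>sum_msg_eq\<close>), which is where the spectral bound enters.\<close>
definition tables_consistent :: "('m,'k) aug_state \<Rightarrow> bool" where
  "tables_consistent S \<longleftrightarrow>
     (\<forall>n k. tab_v S n k = real CARD('k) * blk_in k (h n) (snap S n))
     \<and> (\<forall>n. (\<Sum>k\<in>UNIV. tab_u S n k) = (\<Sum>k\<in>UNIV. tab_v S n k))"

lemma tables_consistent_init: "tables_consistent aug_init"
  unfolding tables_consistent_def aug_init_def tab_v_def tab_u_def snap_def by (simp add: blk_inner_def)

lemma tables_consistent_aug_step:
  assumes "tables_consistent S"
  shows "tables_consistent (aug_step \<mu> S n)"
proof -
  have v: "\<And>n k. tab_v S n k = real CARD('k) * blk_in k (h n) (snap S n)"
    and s: "\<And>n. (\<Sum>k\<in>UNIV. tab_u S n k) = (\<Sum>k\<in>UNIV. tab_v S n k)"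
    using assms unfolding tables_consistent_def by auto
  have "(\<Sum>l\<in>UNIV. msg S n l) = (\<Sum>l\<in>UNIV. tab_u S n l)
      + (\<Sum>l\<in>UNIV. real CARD('k) * blk_in l (h n) (iter_w S)) - (\<Sum>l\<in>UNIV. tab_v S n l)"
    unfolding msg_def by (simp add: sum.distrib sum_subtractf)
  then have "(\<Sum>k\<in>UNIV. comb S n k) = (\<Sum>k\<in>UNIV. real CARD('k) * blk_in k (h n) (iter_w S))"
    using sum_comb[of S n] s[of n] by simp
  then show ?thesis unfolding tables_consistent_def tab_u_aug_step tab_v_aug_step snap_aug_step using v s by auto
qed

lemma tables_consistent_foldl: "tables_consistent (foldl (aug_step \<mu>) S xs)" if "tables_consistent S"
  using that by (induction xs arbitrary: S) (simp, metis tables_consistent_aug_step foldl_Cons)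

definition snap_pred :: "('m,'k) aug_state \<Rightarrow> nat \<Rightarrow> real" where
  "snap_pred S m = h m \<bullet> snap S m"

definition tab_err :: "('m,'k) aug_state \<Rightarrow> nat \<Rightarrow> 'k \<Rightarrow> real" where
  "tab_err S m k = tab_u S m k - snap_pred S m"

definition pred_w :: "('m,'k) aug_state \<Rightarrow> nat \<Rightarrow> real" where
  "pred_w S n = h n \<bullet> iter_w S"

definition feat_sq :: "real" where
  "feat_sq = 1 + (\<Sum>m<N. (norm (h m))^2)"

definition cons_const :: "real" where
  "cons_const = (2 * real CARD('k)^3 + 2 * real CARD('k)) * feat_sq"

lemma norm_feature_sq_le: "m < N \<Longrightarrow> (norm (h m))^2 \<le> feat_sq"
  unfolding feat_sq_def using member_le_sum[of m "{..<N}" "\<lambda>m. (norm (h m))^2"] by simp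

lemma feat_sq_ge_1: "feat_sq \<ge> 1"
  unfolding feat_sq_def by (simp add: sum_nonneg)

lemma cons_const_nonneg: "cons_const \<ge> 0" unfolding cons_const_def using feat_sq_ge_1 by simp

lemma sum_msg_eq:
  assumes "tables_consistent S"
  shows "(\<Sum>l\<in>UNIV. msg S n l) = real CARD('k) * pred_w S n"
proof -
  have "(\<Sum>l\<in>UNIV. msg S n l) = (\<Sum>l\<in>UNIV. tab_u S n l)
      + real CARD('k) * (\<Sum>l\<in>UNIV. blk_in l (h n) (iter_w S)) - (\<Sum>l\<in>UNIV. tab_v S n l)"
    unfolding msg_def by (simp add: sum.distrib sum_subtractf sum_distrib_left)
  also have "\<dots> = real CARD('k) * pred_w S n"
    using assms unfolding tables_consistent_def by (simp add: pred_w_def inner_eq_sum_blk_inner[symmetric])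
  finally show ?thesis .
qed

lemma msg_sub_pred_eq:
  assumes "tables_consistent S"
  shows "msg S n l - pred_w S n = tab_err S n l
           + (real CARD('k) * blk_in l (h n) (iter_w S - snap S n) - h n \<bullet> (iter_w S - snap S n))"
  using assms unfolding tables_consistent_def
  by (simp add: msg_def tab_err_def snap_pred_def pred_w_def blk_inner_diff inner_diff_right algebra_simps)

lemma comb_sub_pred_eq: "comb S n k - pred_w S n = (A *v (\<chi> l. msg S n l - pred_w S n)) $ k"
proof -
  have "(A *v (\<chi> l. msg S n l - pred_w S n)) $ k = (\<Sum>l\<in>UNIV. A$l$k * (msg S n l - pred_w S n))"
    by (simp add: matrix_vector_mult_def A_entry_sym[of k])
  also have "\<dots> = (\<Sum>l\<in>UNIV. A$l$k * msg S n l) - pred_w S n * (\<Sum>l\<in>UNIV. A$l$k)"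
    by (simp add: right_diff_distrib sum_subtractf sum_distrib_left mult.commute)
  also have "\<dots> = comb S n k - pred_w S n" by (simp add: A_col_sum comb_eq_sum)
  finally show ?thesis by simp
qed

lemma consensus_error_le:
  assumes inv: "tables_consistent S" and n: "n < N"
  shows "(\<Sum>k\<in>UNIV. (comb S n k - pred_w S n)^2)
           \<le> lam * (\<Sum>k\<in>UNIV. (tab_err S n k)^2) + cons_const / (1 - lam) * (norm (iter_w S - snap S n))^2"
proof -
  let ?K = "real CARD('k)"
  define d where "d = iter_w S - snap S n"
  define y :: "real^'k" where "y = (\<chi> l. msg S n l - pred_w S n)"
  define a :: "real^'k" where "a = (\<chi> l. tab_err S n l)"
  define rr :: "real^'k" where "rr = (\<chi> l. ?K * blk_in l (h n) d - h n \<bullet> d)"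
  have yar: "y = a + rr"
    unfolding y_def a_def rr_def d_def by (simp add: vec_eq_iff msg_sub_pred_eq[OF inv])
  have sumy: "(\<Sum>l\<in>UNIV. y$l) = 0"
    unfolding y_def using sum_msg_eq[OF inv, of n] by (simp add: sum_subtractf)
  have Ay: "(A *v y)$k = comb S n k - pred_w S n" for k
    unfolding y_def by (rule comb_sub_pred_eq[symmetric])
  have "norm (A *v y) \<le> lam * norm y"
    by (rule consensus_contraction[OF A_sym A_stoch _ sumy, folded lam_eq, OF lam_range(2)])
  moreover have "norm y \<le> norm a + norm rr" using yar norm_triangle_ineq by simp
  ultimately have "(norm (A *v y))^2 \<le> lam^2 * (norm a + norm rr)^2"
    using lam_range by (smt (verit) mult_left_mono norm_ge_zero power_mono power_mult_distrib)
  also have "\<dots> \<le> lam * (norm a)^2 + (norm rr)^2 / (1 - lam)"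
    by (rule contraction_split_le[OF lam_range])
  finally have main: "(norm (A *v y))^2 \<le> lam * (norm a)^2 + (norm rr)^2 / (1 - lam)" .
  have "(norm rr)^2 \<le> (2 * ?K^3 + 2 * ?K) * (norm (h n))^2 * (norm d)^2"
    unfolding rr_def by (rule norm_block_mismatch_sq_le)
  also have "\<dots> \<le> cons_const * (norm d)^2"
    unfolding cons_const_def using norm_feature_sq_le[OF n] by (intro mult_right_mono mult_left_mono) auto
  finally have rr: "(norm rr)^2 / (1 - lam) \<le> cons_const / (1 - lam) * (norm d)^2"
    using lam_range by (simp add: divide_right_mono)
  have "(\<Sum>k\<in>UNIV. (comb S n k - pred_w S n)^2) = (norm (A *v y))^2"
    by (simp add: norm_vec_sq Ay)
  also have "\<dots> \<le> lam * (norm a)^2 + cons_const / (1 - lam) * (norm d)^2"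
    using main rr by linarith
  also have "(norm a)^2 = (\<Sum>k\<in>UNIV. (tab_err S n k)^2)" by (simp add: norm_vec_sq a_def)
  finally show ?thesis unfolding d_def .
qed

definition grad_gap :: "('m,'k) aug_state \<Rightarrow> nat \<Rightarrow> real^'m" where
  "grad_gap S m = (dQ (h m \<bullet> iter_w S) (\<gamma> m) - dQ (snap_pred S m) (\<gamma> m)) *\<^sub>R h m"

definition grad_gap_avg :: "('m,'k) aug_state \<Rightarrow> real^'m" where
  "grad_gap_avg S = (1 / real N) *\<^sub>R (\<Sum>m<N. grad_gap S m)"

definition dir_err :: "('m,'k) aug_state \<Rightarrow> nat \<Rightarrow> real^'m" where
  "dir_err S n = direction S n - risk_grad (iter_w S) - (grad_gap S n - grad_gap_avg S)"

definition sampled_err :: "('m,'k) aug_state \<Rightarrow> nat \<Rightarrow> 'k \<Rightarrow> real" where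
  "sampled_err S n k =
     (dQ (comb S n k) (\<gamma> n) - dQ (pred_w S n) (\<gamma> n)) - (dQ (tab_u S n k) (\<gamma> n) - dQ (snap_pred S n) (\<gamma> n))"

definition table_err_grad :: "('m,'k) aug_state \<Rightarrow> nat \<Rightarrow> 'k \<Rightarrow> real" where
  "table_err_grad S m k = dQ (tab_u S m k) (\<gamma> m) - dQ (snap_pred S m) (\<gamma> m)"

text \<open>\<open>opt_dist\<close>, \<open>snap_dist\<close> and \<open>tab_dev\<close> are the quantities \<open>X\<close>, \<open>D\<close> and \<open>U\<close> of the proof sketch.\<close>
definition opt_dist :: "('m,'k) aug_state \<Rightarrow> real" where
  "opt_dist S = (norm (iter_w S - wstar))^2"

definition snap_dist :: "('m,'k) aug_state \<Rightarrow> real" where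
  "snap_dist S = (1 / real N) * (\<Sum>m<N. (norm (iter_w S - snap S m))^2)"

definition tab_dev :: "('m,'k) aug_state \<Rightarrow> real" where
  "tab_dev S = (\<Sum>m<N. \<Sum>k\<in>UNIV. (tab_err S m k)^2)"

definition err_const :: "real" where
  "err_const = 10 * \<delta>^2 * feat_sq + 4 * \<delta>^2 * feat_sq * cons_const / (1 - lam)"

lemma tab_dev_nonneg: "tab_dev S \<ge> 0" unfolding tab_dev_def by (auto intro!: sum_nonneg)

lemma snap_dist_nonneg: "snap_dist S \<ge> 0" unfolding snap_dist_def by (intro mult_nonneg_nonneg sum_nonneg) auto

lemma opt_dist_nonneg: "opt_dist S \<ge> 0" unfolding opt_dist_def by simp

lemma direction_decomp: "direction S n = risk_grad (iter_w S) + (grad_gap S n - grad_gap_avg S) + dir_err S n"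
  unfolding dir_err_def by simp

lemma dir_err_eq: "dir_err S n = (\<chi> j. sampled_err S n (blk j) * h n $ j) + (1 / real N) *\<^sub>R (\<Sum>m<N. (\<chi> j. table_err_grad S m (blk j) * h m $ j))"
proof (subst vec_eq_iff, intro allI)
  fix j
  let ?k = "blk j"
  have g: "direction S n $ j = (dQ (comb S n ?k) (\<gamma> n) - dQ (tab_u S n ?k) (\<gamma> n)) * (h n)$j
                         + (1 / real N) * (\<Sum>m<N. dQ (tab_u S m ?k) (\<gamma> m) * (h m)$j)
                         + (gr ?k (iter_w S))$j"
    unfolding direction_def by simp
  have gr: "risk_grad (iter_w S) $ j = (1 / real N) * (\<Sum>m<N. dQ (h m \<bullet> iter_w S) (\<gamma> m) * h m $ j) + gr ?k (iter_w S) $ j"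
    unfolding emp_risk_grad_def using sum_reg_grad_component[of "iter_w S" j]
    by (simp add: sum_component)
  have zb: "grad_gap_avg S $ j = (1 / real N) * (\<Sum>m<N. (dQ (h m \<bullet> iter_w S) (\<gamma> m) - dQ (snap_pred S m) (\<gamma> m)) * h m $ j)"
    unfolding grad_gap_avg_def grad_gap_def by (simp add: sum_component)
  have z: "grad_gap S n $ j = (dQ (h n \<bullet> iter_w S) (\<gamma> n) - dQ (snap_pred S n) (\<gamma> n)) * h n $ j"
    unfolding grad_gap_def by simp
  have r: "((\<chi> j. sampled_err S n (blk j) * h n $ j) + (1 / real N) *\<^sub>R (\<Sum>m<N. (\<chi> j. table_err_grad S m (blk j) * h m $ j))) $ j
      = sampled_err S n ?k * h n $ j + (1 / real N) * (\<Sum>m<N. table_err_grad S m ?k * h m $ j)"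
    by (simp add: sum_component)
  have s: "(\<Sum>m<N. dQ (tab_u S m ?k) (\<gamma> m) * (h m)$j) - (\<Sum>m<N. dQ (h m \<bullet> iter_w S) (\<gamma> m) * h m $ j)
      + (\<Sum>m<N. (dQ (h m \<bullet> iter_w S) (\<gamma> m) - dQ (snap_pred S m) (\<gamma> m)) * h m $ j) = (\<Sum>m<N. table_err_grad S m ?k * h m $ j)"
    unfolding table_err_grad_def by (simp only: sum_subtractf[symmetric] sum.distrib[symmetric]) (rule sum.cong, simp, simp add: algebra_simps)
  show "dir_err S n $ j = ((\<chi> j. sampled_err S n (blk j) * h n $ j) + (1 / real N) *\<^sub>R (\<Sum>m<N. (\<chi> j. table_err_grad S m (blk j) * h m $ j))) $ j"
  proof -
    have s': "(1 / real N) * (\<Sum>m<N. dQ (tab_u S m ?k) (\<gamma> m) * (h m)$j) - (1 / real N) * (\<Sum>m<N. dQ (h m \<bullet> iter_w S) (\<gamma> m) * h m $ j)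
      + (1 / real N) * (\<Sum>m<N. (dQ (h m \<bullet> iter_w S) (\<gamma> m) - dQ (snap_pred S m) (\<gamma> m)) * h m $ j) = (1 / real N) * (\<Sum>m<N. table_err_grad S m ?k * h m $ j)"
      using arg_cong[OF s, of "\<lambda>x. (1 / real N) * x"] by (simp only: distrib_left right_diff_distrib)
    show ?thesis unfolding r dir_err_def vector_minus_component g gr zb z
      using s' by (simp add: sampled_err_def pred_w_def algebra_simps)
  qed
qed

lemma sum_sampled_err_sq_le:
  assumes n: "n < N"
  shows "(\<Sum>k\<in>UNIV. (sampled_err S n k)^2)
           \<le> 2 * \<delta>^2 * ((\<Sum>k\<in>UNIV. (comb S n k - pred_w S n)^2) + (\<Sum>k\<in>UNIV. (tab_err S n k)^2))"
proof -
  have "(sampled_err S n k)^2 \<le> 2 * \<delta>^2 * ((comb S n k - pred_w S n)^2 + (tab_err S n k)^2)" for k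
  proof -
    have "\<bar>sampled_err S n k\<bar> \<le> \<delta> * \<bar>comb S n k - pred_w S n\<bar> + \<delta> * \<bar>tab_err S n k\<bar>"
      unfolding sampled_err_def tab_err_def
      using dQ_lip[OF n, of "comb S n k" "pred_w S n"] dQ_lip[OF n, of "tab_u S n k" "snap_pred S n"]
      by linarith
    then have "(sampled_err S n k)^2 \<le> (\<delta> * \<bar>comb S n k - pred_w S n\<bar> + \<delta> * \<bar>tab_err S n k\<bar>)^2"
      by (metis abs_ge_zero power2_abs power_mono)
    also have "\<dots> \<le> 2 * (\<delta> * \<bar>comb S n k - pred_w S n\<bar>)^2 + 2 * (\<delta> * \<bar>tab_err S n k\<bar>)^2"
      by (rule sq_sum_le)
    finally show ?thesis by (simp add: power_mult_distrib algebra_simps)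
  qed
  then have "(\<Sum>k\<in>UNIV. (sampled_err S n k)^2)
      \<le> (\<Sum>k\<in>UNIV. 2 * \<delta>^2 * ((comb S n k - pred_w S n)^2 + (tab_err S n k)^2))"
    by (rule sum_mono)
  also have "\<dots> = 2 * \<delta>^2 * ((\<Sum>k\<in>UNIV. (comb S n k - pred_w S n)^2) + (\<Sum>k\<in>UNIV. (tab_err S n k)^2))"
    by (simp only: sum_distrib_left[symmetric] sum.distrib)
  finally show ?thesis .
qed

lemma sum_table_err_grad_sq_le:
  assumes m: "m < N"
  shows "(\<Sum>k\<in>UNIV. (table_err_grad S m k)^2) \<le> \<delta>^2 * (\<Sum>k\<in>UNIV. (tab_err S m k)^2)"
proof -
  have "(table_err_grad S m k)^2 \<le> \<delta>^2 * (tab_err S m k)^2" for k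
  proof -
    have "\<bar>table_err_grad S m k\<bar> \<le> \<delta> * \<bar>tab_err S m k\<bar>"
      unfolding table_err_grad_def tab_err_def using dQ_lip m by simp
    then have "(table_err_grad S m k)^2 \<le> (\<delta> * \<bar>tab_err S m k\<bar>)^2"
      by (metis abs_ge_zero power2_abs power_mono)
    then show ?thesis by (simp add: power_mult_distrib)
  qed
  then show ?thesis by (simp add: sum_distrib_left sum_mono)
qed

lemma norm_dir_err_sq_le:
  assumes n: "n < N"
  shows "(norm (dir_err S n))^2
           \<le> 4 * \<delta>^2 * feat_sq * ((\<Sum>k\<in>UNIV. (comb S n k - pred_w S n)^2) + (\<Sum>k\<in>UNIV. (tab_err S n k)^2))
             + 2 * \<delta>^2 * feat_sq * ((1 / real N) * tab_dev S)"
proof -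
  define e :: "real^'m" where "e = (\<chi> j. sampled_err S n (blk j) * h n $ j)"
  define f :: "nat \<Rightarrow> real^'m" where "f m = (\<chi> j. table_err_grad S m (blk j) * h m $ j)" for m
  have e: "(norm e)^2
      \<le> (2 * \<delta>^2 * ((\<Sum>k\<in>UNIV. (comb S n k - pred_w S n)^2) + (\<Sum>k\<in>UNIV. (tab_err S n k)^2))) * feat_sq"
  proof -
    have "(norm e)^2 \<le> (\<Sum>k\<in>UNIV. (sampled_err S n k)^2) * (norm (h n))^2"
      unfolding e_def by (rule norm_blockwise_scale_sq_le)
    also have "\<dots> \<le> (2 * \<delta>^2 * ((\<Sum>k\<in>UNIV. (comb S n k - pred_w S n)^2) + (\<Sum>k\<in>UNIV. (tab_err S n k)^2))) * feat_sq"
      using sum_sampled_err_sq_le[OF n, where S = S] norm_feature_sq_le[OF n]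
      by (intro mult_mono) (auto intro!: mult_nonneg_nonneg sum_nonneg add_nonneg_nonneg)
    finally show ?thesis .
  qed
  have f: "(norm (f m))^2 \<le> (\<delta>^2 * (\<Sum>k\<in>UNIV. (tab_err S m k)^2)) * feat_sq" if "m < N" for m
  proof -
    have "(norm (f m))^2 \<le> (\<Sum>k\<in>UNIV. (table_err_grad S m k)^2) * (norm (h m))^2"
      unfolding f_def by (rule norm_blockwise_scale_sq_le)
    also have "\<dots> \<le> (\<delta>^2 * (\<Sum>k\<in>UNIV. (tab_err S m k)^2)) * feat_sq"
      using sum_table_err_grad_sq_le[OF that, where S = S] norm_feature_sq_le[OF that]
      by (intro mult_mono) (auto intro!: mult_nonneg_nonneg sum_nonneg)
    finally show ?thesis .
  qed
  have "(norm (dir_err S n))^2 \<le> 2 * (norm e)^2 + 2 * (norm ((1 / real N) *\<^sub>R (\<Sum>m<N. f m)))^2"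
    using norm_add_sq_le_weighted[of 1 e "(1 / real N) *\<^sub>R (\<Sum>m<N. f m)"]
    unfolding dir_err_eq e_def f_def by simp
  also have "\<dots> \<le> 2 * (norm e)^2 + 2 * ((1 / real N) * (\<Sum>m<N. (norm (f m))^2))"
    using norm_average_sq_le[of N f] N_pos by simp
  also have "\<dots> \<le> 2 * ((2 * \<delta>^2 * ((\<Sum>k\<in>UNIV. (comb S n k - pred_w S n)^2) + (\<Sum>k\<in>UNIV. (tab_err S n k)^2))) * feat_sq)
      + 2 * ((1 / real N) * (\<Sum>m<N. (\<delta>^2 * (\<Sum>k\<in>UNIV. (tab_err S m k)^2)) * feat_sq))"
    using e f N_pos by (intro add_mono mult_left_mono sum_mono) auto
  also have "\<dots> = 4 * \<delta>^2 * feat_sq * ((\<Sum>k\<in>UNIV. (comb S n k - pred_w S n)^2) + (\<Sum>k\<in>UNIV. (tab_err S n k)^2))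
      + 2 * \<delta>^2 * feat_sq * ((1 / real N) * tab_dev S)"
    unfolding tab_dev_def by (simp add: sum_distrib_left sum_distrib_right algebra_simps)
  finally show ?thesis .
qed

lemma avg_dir_err_sq_le:
  assumes inv: "tables_consistent S"
  shows "(1 / real N) * (\<Sum>n<N. (norm (dir_err S n))^2) \<le> err_const * ((1 / real N) * tab_dev S + snap_dist S)"
proof -
  let ?c = "4 * \<delta>^2 * feat_sq * cons_const / (1 - lam)"
  have pointwise: "(norm (dir_err S n))^2 \<le> 8 * \<delta>^2 * feat_sq * (\<Sum>k\<in>UNIV. (tab_err S n k)^2)
      + ?c * (norm (iter_w S - snap S n))^2 + 2 * \<delta>^2 * feat_sq * ((1 / real N) * tab_dev S)"
    if n: "n < N" for n
  proof -
    have "lam * (\<Sum>k\<in>UNIV. (tab_err S n k)^2) \<le> (\<Sum>k\<in>UNIV. (tab_err S n k)^2)"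
      using lam_range by (intro mult_left_le_one_le) (auto intro: sum_nonneg)
    then have "(\<Sum>k\<in>UNIV. (comb S n k - pred_w S n)^2) + (\<Sum>k\<in>UNIV. (tab_err S n k)^2)
        \<le> 2 * (\<Sum>k\<in>UNIV. (tab_err S n k)^2) + cons_const / (1 - lam) * (norm (iter_w S - snap S n))^2"
      using consensus_error_le[OF inv n] by simp
    then have "4 * \<delta>^2 * feat_sq * ((\<Sum>k\<in>UNIV. (comb S n k - pred_w S n)^2) + (\<Sum>k\<in>UNIV. (tab_err S n k)^2))
        \<le> 4 * \<delta>^2 * feat_sq * (2 * (\<Sum>k\<in>UNIV. (tab_err S n k)^2) + cons_const / (1 - lam) * (norm (iter_w S - snap S n))^2)"
      using feat_sq_ge_1 by (intro mult_left_mono) auto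
    then show ?thesis using norm_dir_err_sq_le[OF n, where S = S] by (simp add: algebra_simps)
  qed
  have "(\<Sum>n<N. (norm (dir_err S n))^2) \<le> (\<Sum>n<N. 8 * \<delta>^2 * feat_sq * (\<Sum>k\<in>UNIV. (tab_err S n k)^2)
      + ?c * (norm (iter_w S - snap S n))^2 + 2 * \<delta>^2 * feat_sq * ((1 / real N) * tab_dev S))"
    by (rule sum_mono) (use pointwise in auto)
  also have "\<dots> = 8 * \<delta>^2 * feat_sq * tab_dev S + ?c * (real N * snap_dist S) + 2 * \<delta>^2 * feat_sq * tab_dev S"
    unfolding tab_dev_def snap_dist_def using N_pos by (simp add: sum.distrib sum_distrib_left)
  finally have "(1 / real N) * (\<Sum>n<N. (norm (dir_err S n))^2)
      \<le> (1 / real N) * (8 * \<delta>^2 * feat_sq * tab_dev S + ?c * (real N * snap_dist S) + 2 * \<delta>^2 * feat_sq * tab_dev S)"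
    using N_pos by (simp add: divide_right_mono)
  also have "\<dots> = 10 * \<delta>^2 * feat_sq * ((1 / real N) * tab_dev S) + ?c * snap_dist S"
    using N_pos by (simp add: field_simps)
  also have "\<dots> \<le> err_const * ((1 / real N) * tab_dev S + snap_dist S)"
    unfolding err_const_def
    using tab_dev_nonneg[of S] snap_dist_nonneg[of S] cons_const_nonneg feat_sq_ge_1 lam_range N_pos
    by (intro add_mult_le_mult_add) auto
  finally show ?thesis .
qed

lemma sum_grad_gap_centered: "(\<Sum>n<N. grad_gap S n - grad_gap_avg S) = 0"
proof -
  have "(\<Sum>n<N. grad_gap_avg S) = real N *\<^sub>R grad_gap_avg S" by (simp only: sum_constant_scaleR card_lessThan)
  also have "\<dots> = (\<Sum>n<N. grad_gap S n)" unfolding grad_gap_avg_def using N_pos by simp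
  finally show ?thesis by (simp add: sum_subtractf)
qed

lemma norm_grad_gap_sq_le: "n < N \<Longrightarrow> (norm (grad_gap S n))^2 \<le> L^2 * (norm (iter_w S - snap S n))^2"
proof -
  assume n: "n < N"
  have "norm (grad_gap S n) \<le> L * norm (iter_w S - snap S n)"
    unfolding grad_gap_def snap_pred_def using Q_lip[OF n, of "iter_w S" "snap S n"] by (simp add: scaleR_diff_left)
  then show ?thesis using L_pos by (metis norm_ge_zero power_mono power_mult_distrib)
qed

lemma sum_grad_gap_centered_sq_le: "(\<Sum>n<N. (norm (grad_gap S n - grad_gap_avg S))^2) \<le> L^2 * (real N * snap_dist S)"
proof -
  have "(\<Sum>n<N. (norm (grad_gap S n - grad_gap_avg S))^2) \<le> (\<Sum>n<N. (norm (grad_gap S n))^2)"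
    unfolding grad_gap_avg_def by (rule sum_sq_dist_average_le) (use N_pos in simp)
  also have "\<dots> \<le> (\<Sum>n<N. L^2 * (norm (iter_w S - snap S n))^2)" by (rule sum_mono) (simp add: norm_grad_gap_sq_le)
  also have "\<dots> = L^2 * (real N * snap_dist S)" unfolding snap_dist_def using N_pos by (simp add: sum_distrib_left)
  finally show ?thesis .
qed

lemma avg_direction_sq_le:
  shows "(1 / real N) * (\<Sum>n<N. (norm (direction S n))^2) \<le> 3 * (L + \<eta>)^2 * opt_dist S + 3 * L^2 * snap_dist S + 3 * ((1 / real N) * (\<Sum>n<N. (norm (dir_err S n))^2))"
proof -
  have "(\<Sum>n<N. (norm (direction S n))^2) \<le> (\<Sum>n<N. 3 * (norm (risk_grad (iter_w S)))^2 + 3 * (norm (grad_gap S n - grad_gap_avg S))^2 + 3 * (norm (dir_err S n))^2)"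
    unfolding direction_decomp by (rule sum_mono) (rule norm_add3_sq_le)
  also have "\<dots> = real N * (3 * (norm (risk_grad (iter_w S)))^2) + 3 * (\<Sum>n<N. (norm (grad_gap S n - grad_gap_avg S))^2) + 3 * (\<Sum>n<N. (norm (dir_err S n))^2)"
    by (simp add: sum.distrib sum_distrib_left)
  also have "\<dots> \<le> real N * (3 * ((L + \<eta>)^2 * opt_dist S)) + 3 * (L^2 * (real N * snap_dist S)) + 3 * (\<Sum>n<N. (norm (dir_err S n))^2)"
    using norm_risk_grad_sq_le[of "iter_w S"] sum_grad_gap_centered_sq_le[of S] unfolding opt_dist_def by (intro add_mono mult_left_mono) auto
  finally have "(1 / real N) * (\<Sum>n<N. (norm (direction S n))^2) \<le> (1 / real N) * (real N * (3 * ((L + \<eta>)^2 * opt_dist S)) + 3 * (L^2 * (real N * snap_dist S)) + 3 * (\<Sum>n<N. (norm (dir_err S n))^2))"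
    using N_pos by (simp add: divide_right_mono)
  also have "\<dots> = 3 * (L + \<eta>)^2 * opt_dist S + 3 * L^2 * snap_dist S + 3 * ((1 / real N) * (\<Sum>n<N. (norm (dir_err S n))^2))"
    using N_pos by (simp add: field_simps)
  finally show ?thesis .
qed

lemma tab_dev_aug_step_le:
  assumes inv: "tables_consistent S" and n: "n < N"
  shows "tab_dev (aug_step \<mu> S n) \<le> tab_dev S - (1 - lam) * (\<Sum>k\<in>UNIV. (tab_err S n k)^2)
           + cons_const / (1 - lam) * (norm (iter_w S - snap S n))^2"
proof -
  have "tab_err (aug_step \<mu> S n) m k = (if m = n then comb S n k - pred_w S n else tab_err S m k)" for m k
    unfolding tab_err_def snap_pred_def pred_w_def tab_u_aug_step snap_aug_step by simp
  then have "tab_dev (aug_step \<mu> S n)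
      = (\<Sum>m<N. if m = n then (\<Sum>k\<in>UNIV. (comb S n k - pred_w S n)^2) else (\<Sum>k\<in>UNIV. (tab_err S m k)^2))"
    unfolding tab_dev_def by (intro sum.cong refl) auto
  also have "\<dots> = tab_dev S - (\<Sum>k\<in>UNIV. (tab_err S n k)^2) + (\<Sum>k\<in>UNIV. (comb S n k - pred_w S n)^2)"
    unfolding tab_dev_def using n by (simp add: sum.delta_remove sum_diff1)
  finally show ?thesis using consensus_error_le[OF inv n] by (simp add: algebra_simps)
qed

lemma avg_tab_dev_aug_step:
  assumes inv: "tables_consistent S"
  shows "(1 / real N) * (\<Sum>n<N. tab_dev (aug_step \<mu> S n))
           \<le> (1 - (1 - lam) / real N) * tab_dev S + cons_const / (1 - lam) * snap_dist S"
proof -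
  have "(\<Sum>n<N. tab_dev (aug_step \<mu> S n)) \<le> (\<Sum>n<N. tab_dev S - (1 - lam) * (\<Sum>k\<in>UNIV. (tab_err S n k)^2)
      + cons_const / (1 - lam) * (norm (iter_w S - snap S n))^2)"
    by (rule sum_mono) (use tab_dev_aug_step_le[OF inv] in auto)
  also have "\<dots> = real N * tab_dev S - (1 - lam) * tab_dev S + cons_const / (1 - lam) * (real N * snap_dist S)"
    unfolding tab_dev_def snap_dist_def using N_pos by (simp add: sum.distrib sum_subtractf sum_distrib_left)
  finally have "(1 / real N) * (\<Sum>n<N. tab_dev (aug_step \<mu> S n))
      \<le> (1 / real N) * (real N * tab_dev S - (1 - lam) * tab_dev S + cons_const / (1 - lam) * (real N * snap_dist S))"
    using N_pos by (simp add: divide_right_mono)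
  also have "\<dots> = (1 - (1 - lam) / real N) * tab_dev S + cons_const / (1 - lam) * snap_dist S"
    using N_pos by (simp add: field_simps)
  finally show ?thesis .
qed

lemma snap_dist_aug_step_le:
  assumes t: "0 < t" and n: "n < N"
  shows "snap_dist (aug_step \<mu> S n) \<le> (1 + t) * snap_dist S + (1 + 1/t) * (\<mu>^2 * (norm (direction S n))^2)
           - (1 + t) / real N * (norm (iter_w S - snap S n))^2"
proof -
  let ?w = "iter_w S" and ?ph = "snap S" and ?g = "\<mu>^2 * (norm (direction S n))^2"
  have each: "(norm (iter_w (aug_step \<mu> S n) - snap (aug_step \<mu> S n) m))^2
      \<le> (1 + t) * (norm (?w - ?ph m))^2 + (1 + 1/t) * ?g - (if m = n then (1 + t) * (norm (?w - ?ph n))^2 else 0)"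
    for m
  proof (cases "m = n")
    case True
    have "(norm (iter_w (aug_step \<mu> S n) - snap (aug_step \<mu> S n) m))^2 = ?g"
      using True unfolding iter_w_aug_step snap_aug_step by (simp add: power_mult_distrib)
    also have "\<dots> \<le> (1 + 1/t) * ?g" using t by (simp add: distrib_right)
    finally show ?thesis using True by simp
  next
    case False
    have "(norm (iter_w (aug_step \<mu> S n) - snap (aug_step \<mu> S n) m))^2
        = (norm ((?w - ?ph m) + (- (\<mu> *\<^sub>R direction S n))))^2"
      using False unfolding iter_w_aug_step snap_aug_step by (simp add: algebra_simps)
    also have "\<dots> \<le> (1 + t) * (norm (?w - ?ph m))^2 + (1 + 1/t) * (norm (- (\<mu> *\<^sub>R direction S n)))^2"
      by (rule norm_add_sq_le_weighted[OF t])
    finally show ?thesis using False by (simp add: power_mult_distrib)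
  qed
  have "(\<Sum>m<N. (norm (iter_w (aug_step \<mu> S n) - snap (aug_step \<mu> S n) m))^2)
      \<le> (\<Sum>m<N. (1 + t) * (norm (?w - ?ph m))^2 + (1 + 1/t) * ?g
            - (if m = n then (1 + t) * (norm (?w - ?ph n))^2 else 0))"
    by (rule sum_mono) (rule each)
  also have "\<dots> = (1 + t) * (\<Sum>m<N. (norm (?w - ?ph m))^2) + real N * ((1 + 1/t) * ?g) - (1 + t) * (norm (?w - ?ph n))^2"
    using n by (simp add: sum_subtractf sum.distrib sum_distrib_left)
  finally have "(1 / real N) * (\<Sum>m<N. (norm (iter_w (aug_step \<mu> S n) - snap (aug_step \<mu> S n) m))^2)
      \<le> (1 / real N) * ((1 + t) * (\<Sum>m<N. (norm (?w - ?ph m))^2) + real N * ((1 + 1/t) * ?g)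
            - (1 + t) * (norm (?w - ?ph n))^2)"
    using N_pos by (simp add: divide_right_mono)
  also have "\<dots> = (1 + t) * snap_dist S + (1 + 1/t) * ?g - (1 + t) / real N * (norm (?w - ?ph n))^2"
    unfolding snap_dist_def using N_pos by (simp add: field_simps)
  finally show ?thesis unfolding snap_dist_def[of "aug_step \<mu> S n"] .
qed

lemma avg_snap_dist_aug_step:
  "(1 / real N) * (\<Sum>n<N. snap_dist (aug_step \<mu> S n))
     \<le> (1 - 1 / (2 * real N)) * snap_dist S + 3 * real N * \<mu>^2 * ((1 / real N) * (\<Sum>n<N. (norm (direction S n))^2))"
proof -
  define t where "t = 1 / (2 * real N)"
  have t0: "t > 0" unfolding t_def using N_pos by simp
  have "(\<Sum>n<N. snap_dist (aug_step \<mu> S n)) \<le> (\<Sum>n<N. (1 + t) * snap_dist S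
      + (1 + 1/t) * (\<mu>^2 * (norm (direction S n))^2) - (1 + t) / real N * (norm (iter_w S - snap S n))^2)"
    by (rule sum_mono) (use snap_dist_aug_step_le[OF t0] in auto)
  also have "\<dots> = real N * ((1 + t) * snap_dist S) + (1 + 1/t) * \<mu>^2 * (\<Sum>n<N. (norm (direction S n))^2)
      - (1 + t) * snap_dist S"
    unfolding snap_dist_def using N_pos by (simp add: sum.distrib sum_subtractf sum_distrib_left mult.assoc)
  finally have "(1 / real N) * (\<Sum>n<N. snap_dist (aug_step \<mu> S n))
      \<le> (1 / real N) * (real N * ((1 + t) * snap_dist S) + (1 + 1/t) * \<mu>^2 * (\<Sum>n<N. (norm (direction S n))^2)
            - (1 + t) * snap_dist S)"
    using N_pos by (simp add: divide_right_mono)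
  also have "\<dots> = ((1 + t) * (1 - 1 / real N)) * snap_dist S
      + (1 + 1/t) * \<mu>^2 * ((1 / real N) * (\<Sum>n<N. (norm (direction S n))^2))"
    using N_pos by (simp add: field_simps)
  also have "\<dots> \<le> (1 - 1 / (2 * real N)) * snap_dist S
      + 3 * real N * \<mu>^2 * ((1 / real N) * (\<Sum>n<N. (norm (direction S n))^2))"
  proof (intro add_mono mult_right_mono)
    show "(1 + t) * (1 - 1 / real N) \<le> 1 - 1 / (2 * real N)"
      unfolding t_def using N_pos by (simp add: field_simps)
    show "1 + 1/t \<le> 3 * real N"
      unfolding t_def using N_pos by simp
  qed (auto simp: snap_dist_nonneg intro!: sum_nonneg divide_nonneg_nonneg)
  finally show ?thesis .
qed

lemma sum_opt_dist_aug_step_le: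
  assumes t0: "0 < t" and mu: "0 \<le> \<mu>"
  shows "(\<Sum>n<N. opt_dist (aug_step \<mu> S n))
           \<le> (1 + t) * (real N * ((1 - 2 * \<mu> * \<nu> + \<mu>^2 * (L + \<eta>)^2) * opt_dist S)
                + \<mu>^2 * (L^2 * (real N * snap_dist S)))
             + (1 + 1/t) * \<mu>^2 * (\<Sum>n<N. (norm (dir_err S n))^2)"
proof -
  define a where "a = iter_w S - wstar - \<mu> *\<^sub>R risk_grad (iter_w S)"
  define xi where "xi n = grad_gap S n - grad_gap_avg S" for n
  have each: "opt_dist (aug_step \<mu> S n)
      \<le> (1 + t) * (norm (a - \<mu> *\<^sub>R xi n))^2 + (1 + 1/t) * (\<mu>^2 * (norm (dir_err S n))^2)" for n
  proof -
    have "opt_dist (aug_step \<mu> S n) = (norm ((a - \<mu> *\<^sub>R xi n) + (- (\<mu> *\<^sub>R dir_err S n))))^2"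
      unfolding opt_dist_def iter_w_aug_step direction_decomp a_def xi_def by (simp add: algebra_simps)
    also have "\<dots> \<le> (1 + t) * (norm (a - \<mu> *\<^sub>R xi n))^2 + (1 + 1/t) * (norm (- (\<mu> *\<^sub>R dir_err S n)))^2"
      by (rule norm_add_sq_le_weighted[OF t0])
    finally show ?thesis by (simp add: power_mult_distrib)
  qed
  have sq: "(\<Sum>n<N. (norm (a - \<mu> *\<^sub>R xi n))^2) = real N * (norm a)^2 + \<mu>^2 * (\<Sum>n<N. (norm (xi n))^2)"
    using sum_norm_sq_diff_centered[of xi "{..<N}" a \<mu>] sum_grad_gap_centered[of S] unfolding xi_def by simp
  have "(\<Sum>n<N. opt_dist (aug_step \<mu> S n))
      \<le> (\<Sum>n<N. (1 + t) * (norm (a - \<mu> *\<^sub>R xi n))^2 + (1 + 1/t) * (\<mu>^2 * (norm (dir_err S n))^2))"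
    by (rule sum_mono) (rule each)
  also have "\<dots> = (1 + t) * (real N * (norm a)^2 + \<mu>^2 * (\<Sum>n<N. (norm (xi n))^2))
      + (1 + 1/t) * \<mu>^2 * (\<Sum>n<N. (norm (dir_err S n))^2)"
    by (simp only: sum.distrib sum_distrib_left[symmetric] sq mult.assoc)
  also have "\<dots> \<le> (1 + t) * (real N * ((1 - 2 * \<mu> * \<nu> + \<mu>^2 * (L + \<eta>)^2) * opt_dist S) + \<mu>^2 * (L^2 * (real N * snap_dist S)))
      + (1 + 1/t) * \<mu>^2 * (\<Sum>n<N. (norm (dir_err S n))^2)"
  proof -
    have "(norm a)^2 \<le> (1 - 2 * \<mu> * \<nu> + \<mu>^2 * (L + \<eta>)^2) * opt_dist S"
      unfolding a_def opt_dist_def using gradient_step_contraction[of \<mu> "iter_w S"] mu by simp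
    moreover have "(\<Sum>n<N. (norm (xi n))^2) \<le> L^2 * (real N * snap_dist S)"
      unfolding xi_def by (rule sum_grad_gap_centered_sq_le)
    ultimately show ?thesis using t0 by (intro add_mono mult_left_mono) auto
  qed
  finally show ?thesis .
qed

lemma avg_opt_dist_aug_step:
  assumes mu: "0 < \<mu>" and mn: "\<mu> * \<nu> \<le> 1"
  shows "(1 / real N) * (\<Sum>n<N. opt_dist (aug_step \<mu> S n))
           \<le> (1 - \<mu> * \<nu> + 2 * \<mu>^2 * (L + \<eta>)^2) * opt_dist S + 2 * \<mu>^2 * L^2 * snap_dist S
             + (2 * \<mu> / \<nu>) * ((1 / real N) * (\<Sum>n<N. (norm (dir_err S n))^2))"
proof -
  define t where "t = \<mu> * \<nu>"
  have t0: "t > 0" and t1: "t \<le> 1" unfolding t_def using mu nu_pos mn by simp_all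
  from sum_opt_dist_aug_step_le[OF t0 less_imp_le[OF mu], where S = S]
  have "(1 / real N) * (\<Sum>n<N. opt_dist (aug_step \<mu> S n))
      \<le> (1 / real N) * ((1 + t) * (real N * ((1 - 2 * \<mu> * \<nu> + \<mu>^2 * (L + \<eta>)^2) * opt_dist S)
            + \<mu>^2 * (L^2 * (real N * snap_dist S))) + (1 + 1/t) * \<mu>^2 * (\<Sum>n<N. (norm (dir_err S n))^2))"
    using N_pos by (simp add: divide_right_mono)
  also have "\<dots> = ((1 + t) * (1 - 2 * \<mu> * \<nu> + \<mu>^2 * (L + \<eta>)^2)) * opt_dist S + ((1 + t) * \<mu>^2 * L^2) * snap_dist S
      + ((1 + 1/t) * \<mu>^2) * ((1 / real N) * (\<Sum>n<N. (norm (dir_err S n))^2))"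
    using N_pos by (simp add: field_simps)
  also have "\<dots> \<le> (1 - \<mu> * \<nu> + 2 * \<mu>^2 * (L + \<eta>)^2) * opt_dist S + 2 * \<mu>^2 * L^2 * snap_dist S
      + (2 * \<mu> / \<nu>) * ((1 / real N) * (\<Sum>n<N. (norm (dir_err S n))^2))"
  proof (intro add_mono mult_right_mono)
    show "(1 + t) * (1 - 2 * \<mu> * \<nu> + \<mu>^2 * (L + \<eta>)^2) \<le> 1 - \<mu> * \<nu> + 2 * \<mu>^2 * (L + \<eta>)^2"
      using young_factor_le[OF t0 t1, of "\<mu>^2 * (L + \<eta>)^2"] unfolding t_def by (simp add: algebra_simps)
    show "1 + t \<le> 2" using t1 by simp
    have "(1 + 1/t) * \<mu>^2 = \<mu>^2 + \<mu> / \<nu>"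
      unfolding t_def using mu nu_pos by (simp add: field_simps power2_eq_square)
    also have "\<dots> \<le> 2 * \<mu> / \<nu>"
    proof -
      have "\<mu>^2 \<le> \<mu> / \<nu>" using mn mu nu_pos by (simp add: field_simps power2_eq_square)
      then show ?thesis by simp
    qed
    finally show "(1 + 1/t) * \<mu>^2 \<le> 2 * \<mu> / \<nu>" .
  qed (auto simp: opt_dist_nonneg snap_dist_nonneg intro!: sum_nonneg divide_nonneg_nonneg)
  finally show ?thesis .
qed

subsection \<open>The Lyapunov function\<close>

definition grad_lip :: "real" where
  "grad_lip = L + \<eta>"

text \<open>\<open>weight_snap\<close> and \<open>weight_tab\<close> are the weights \<open>\<alpha>\<close> and \<open>\<beta>\<close> of the proof sketch; they are
  just large enough to absorb the error terms of the one-step bounds (\<open>lyap_coeff_*\<close>), and the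
  step-size bound then makes the remaining \<open>O(\<mu>\<^sup>2)\<close> terms negligible.\<close>
definition weight_tab :: "real" where
  "weight_tab = 8 * err_const / (\<nu> * (1 - lam))"

definition weight_snap :: "real" where
  "weight_snap = (4 * real N / lam) * (2 * err_const / \<nu> + weight_tab * cons_const / (1 - lam) + 1)"

definition step_const :: "real" where
  "step_const = 9 * weight_snap * real N"

definition step_bound :: "real" where
  "step_bound = min 1 (min (1 / \<nu>) (min (1 / (2 * L^2)) (min (\<nu> / (8 * grad_lip^2))
     (min (2 / (\<nu> * step_const)) (min (1 / (step_const * (L^2 + err_const))) (\<nu> / (4 * step_const * grad_lip^2)))))))"

definition rate :: "real \<Rightarrow> real" where
  "rate \<mu> = max (1 - (1 - lam) / (2 * real N)) (1 - \<mu> * \<nu> / 4)"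

definition lyap :: "real \<Rightarrow> ('m,'k) aug_state \<Rightarrow> real" where
  "lyap \<mu> S = opt_dist S + (\<mu> * weight_snap) * snap_dist S + (\<mu> * weight_tab) * tab_dev S"

lemma err_const_pos: "err_const > 0"
proof -
  have "10 * \<delta>^2 * feat_sq > 0" using delta_pos feat_sq_ge_1 by simp
  moreover have "4 * \<delta>^2 * feat_sq * cons_const / (1 - lam) \<ge> 0" using feat_sq_ge_1 cons_const_nonneg lam_range by simp
  ultimately show ?thesis unfolding err_const_def by linarith
qed

lemma grad_lip_pos: "grad_lip > 0" unfolding grad_lip_def using L_pos eta_nonneg by simp

lemma weight_tab_pos: "weight_tab > 0" unfolding weight_tab_def using err_const_pos nu_pos lam_range by simp

lemma weight_snap_pos: "weight_snap > 0"
proof -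
  have "2 * err_const / \<nu> + weight_tab * cons_const / (1 - lam) + 1 > 0"
    using err_const_pos nu_pos weight_tab_pos cons_const_nonneg lam_range by (smt (verit) divide_nonneg_pos mult_nonneg_nonneg)
  then show ?thesis unfolding weight_snap_def using N_pos lam_range by simp
qed

lemma step_const_pos: "step_const > 0" unfolding step_const_def using weight_snap_pos N_pos by simp

lemma L_sq_err_const_pos: "L^2 + err_const > 0" using err_const_pos by (smt (verit) zero_le_power2)

lemma step_bound_pos: "step_bound > 0"
  unfolding step_bound_def using nu_pos L_pos grad_lip_pos step_const_pos err_const_pos L_sq_err_const_pos by simp

lemma rate_pos: "rate \<mu> > 0"
proof -
  have "1 - (1 - lam) / (2 * real N) > 0"
  proof -
    have "(1 - lam) / (2 * real N) \<le> (1 - lam) / 2" using N_pos lam_range by (intro divide_left_mono) auto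
    moreover have "\<And>x l::real. x \<le> (1 - l) / 2 \<Longrightarrow> 0 < l \<Longrightarrow> 0 < 1 - x" by (simp add: field_simps)
    ultimately show ?thesis using lam_range by blast
  qed
  then show ?thesis unfolding rate_def by simp
qed

lemma step_bound_consequences:
  assumes mu: "0 < \<mu>" "\<mu> \<le> step_bound"
  shows "\<mu> * \<nu> \<le> 1" and "2 * \<mu> * L^2 \<le> 1" and "2 * \<mu> * grad_lip^2 \<le> \<nu> / 4"
    and "step_const * \<mu>^2 \<le> 2 / \<nu>" and "step_const * \<mu>^2 * (L^2 + err_const) \<le> 1"
    and "step_const * \<mu>^2 * grad_lip^2 \<le> \<nu> / 4"
proof -
  have m1: "\<mu> \<le> 1" and m2: "\<mu> \<le> 1 / \<nu>" and m3: "\<mu> \<le> 1 / (2 * L^2)" and m4: "\<mu> \<le> \<nu> / (8 * grad_lip^2)"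
    and m5: "\<mu> \<le> 2 / (\<nu> * step_const)" and m6: "\<mu> \<le> 1 / (step_const * (L^2 + err_const))"
    and m7: "\<mu> \<le> \<nu> / (4 * step_const * grad_lip^2)"
    using mu(2) unfolding step_bound_def by simp_all
  have musq: "\<mu>^2 \<le> \<mu>" using m1 mu(1) by (simp add: power2_eq_square mult_left_le_one_le)
  show "\<mu> * \<nu> \<le> 1" using m2 nu_pos by (simp add: field_simps)
  show "2 * \<mu> * L^2 \<le> 1" using m3 L_pos by (simp add: field_simps)
  show "2 * \<mu> * grad_lip^2 \<le> \<nu> / 4" using m4 grad_lip_pos by (simp add: field_simps)
  have "step_const * \<mu> \<le> 2 / \<nu>" using m5 step_const_pos nu_pos by (simp add: field_simps)
  moreover have "step_const * \<mu>^2 \<le> step_const * \<mu>" using musq step_const_pos by simp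
  ultimately show "step_const * \<mu>^2 \<le> 2 / \<nu>" by linarith
  have p: "step_const * (L^2 + err_const) > 0" using step_const_pos L_sq_err_const_pos by simp
  have "step_const * (L^2 + err_const) * \<mu> \<le> 1" using m6 p by (simp add: field_simps)
  moreover have "step_const * (L^2 + err_const) * \<mu>^2 \<le> step_const * (L^2 + err_const) * \<mu>"
    using mult_left_mono[OF musq, of "step_const * (L^2 + err_const)"] p by linarith
  ultimately show "step_const * \<mu>^2 * (L^2 + err_const) \<le> 1" by (simp add: algebra_simps)
  have q: "step_const * grad_lip^2 > 0" using step_const_pos grad_lip_pos by simp
  have "step_const * grad_lip^2 * \<mu> \<le> \<nu> / 4" using m7 q by (simp add: field_simps)
  moreover have "step_const * grad_lip^2 * \<mu>^2 \<le> step_const * grad_lip^2 * \<mu>"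
    using mult_left_mono[OF musq, of "step_const * grad_lip^2"] q by linarith
  ultimately show "step_const * \<mu>^2 * grad_lip^2 \<le> \<nu> / 4" by (simp add: algebra_simps)
qed

lemma lyap_coeff_opt_dist_le:
  assumes mu: "0 < \<mu>" "\<mu> \<le> step_bound"
  shows "(1 - \<mu> * \<nu> + 2 * \<mu>^2 * grad_lip^2) + \<mu> * weight_snap * (9 * real N * \<mu>^2 * grad_lip^2) \<le> rate \<mu>"
proof -
  have "\<mu> * (2 * \<mu> * grad_lip^2) \<le> \<mu> * (\<nu> / 4)"
    using step_bound_consequences(3)[OF mu] mu by (intro mult_left_mono) auto
  then have e1: "2 * \<mu>^2 * grad_lip^2 \<le> \<mu> * (\<nu> / 4)" by (simp add: power2_eq_square algebra_simps)
  have "\<mu> * weight_snap * (9 * real N * \<mu>^2 * grad_lip^2) = \<mu> * (step_const * \<mu>^2 * grad_lip^2)"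
    unfolding step_const_def by (simp add: algebra_simps)
  also have "\<dots> \<le> \<mu> * (\<nu> / 4)"
    using step_bound_consequences(6)[OF mu] mu by (intro mult_left_mono) auto
  finally have e2: "\<mu> * weight_snap * (9 * real N * \<mu>^2 * grad_lip^2) \<le> \<mu> * (\<nu> / 4)" .
  have "1 - \<mu> * \<nu> / 4 \<le> rate \<mu>" unfolding rate_def by simp
  moreover have "\<mu> * \<nu> \<ge> 0" using mu nu_pos by simp
  ultimately show ?thesis using e1 e2 by (simp add: algebra_simps)
qed

lemma lyap_coeff_snap_dist_le:
  assumes mu: "0 < \<mu>" "\<mu> \<le> step_bound"
  shows "(2 * \<mu>^2 * L^2 + (2 * \<mu> / \<nu>) * err_const)
           + \<mu> * weight_snap * (1 - 1 / (2 * real N) + 9 * real N * \<mu>^2 * (L^2 + err_const))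
           + \<mu> * weight_tab * (cons_const / (1 - lam)) \<le> rate \<mu> * (\<mu> * weight_snap)"
proof -
  define a where "a = \<mu> * weight_snap"
  define P where "P = 2 * err_const / \<nu> + weight_tab * cons_const / (1 - lam)"
  have P0: "P \<ge> 0" unfolding P_def using err_const_pos nu_pos weight_tab_pos cons_const_nonneg lam_range by simp
  have a0: "a \<ge> 0" unfolding a_def using mu weight_snap_pos by simp
  have aa: "a * (lam / (2 * real N)) = \<mu> * (2 * P + 2)"
    unfolding a_def weight_snap_def P_def using lam_range N_pos by (simp add: field_simps)
  have t1: "2 * \<mu>^2 * L^2 \<le> \<mu> * 1"
  proof -
    have "\<mu> * (2 * \<mu> * L^2) \<le> \<mu> * 1" using step_bound_consequences(2)[OF mu] mu by (intro mult_left_mono) auto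
    then show ?thesis by (simp add: power2_eq_square algebra_simps)
  qed
  have t2: "a * (9 * real N * \<mu>^2 * (L^2 + err_const)) \<le> \<mu> * 1"
  proof -
    have "a * (9 * real N * \<mu>^2 * (L^2 + err_const)) = \<mu> * (step_const * \<mu>^2 * (L^2 + err_const))"
      unfolding a_def step_const_def by (simp add: algebra_simps)
    also have "\<dots> \<le> \<mu> * 1" using step_bound_consequences(5)[OF mu] mu by (intro mult_left_mono) auto
    finally show ?thesis .
  qed
  have t3: "(2 * \<mu> / \<nu>) * err_const + \<mu> * weight_tab * (cons_const / (1 - lam)) = \<mu> * P"
    unfolding P_def by (simp add: field_simps)
  have "rate \<mu> * a \<ge> (1 - (1 - lam) / (2 * real N)) * a" unfolding rate_def using a0 by (intro mult_right_mono) auto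
  moreover have "(1 - (1 - lam) / (2 * real N)) * a = a * (1 - 1 / (2 * real N)) + a * (lam / (2 * real N))"
    by (simp add: diff_divide_distrib algebra_simps)
  moreover have "\<mu> * P \<ge> 0" using P0 mu by simp
  ultimately show ?thesis using aa t1 t2 t3 unfolding a_def by (simp add: algebra_simps)
qed

lemma lyap_coeff_tab_dev_le:
  assumes mu: "0 < \<mu>" "\<mu> \<le> step_bound"
  shows "(2 * \<mu> / \<nu>) * err_const / real N + \<mu> * weight_snap * (9 * \<mu>^2 * err_const)
           + \<mu> * weight_tab * (1 - (1 - lam) / real N) \<le> rate \<mu> * (\<mu> * weight_tab)"
proof -
  define b where "b = \<mu> * weight_tab"
  have b0: "b \<ge> 0" unfolding b_def using mu weight_tab_pos by simp
  have bb: "b * ((1 - lam) / (2 * real N)) = 4 * \<mu> * err_const / (\<nu> * real N)"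
    unfolding b_def weight_tab_def using lam_range nu_pos N_pos by (simp add: field_simps)
  have e: "\<mu> * weight_snap * (9 * \<mu>^2 * err_const) \<le> 2 * \<mu> * err_const / (\<nu> * real N)"
  proof -
    have "\<mu> * weight_snap * (9 * \<mu>^2 * err_const) = (\<mu> * err_const / real N) * (step_const * \<mu>^2)"
      unfolding step_const_def using N_pos by (simp add: field_simps)
    also have "\<dots> \<le> (\<mu> * err_const / real N) * (2 / \<nu>)"
      using step_bound_consequences(4)[OF mu] mu err_const_pos N_pos by (intro mult_left_mono) auto
    also have "\<dots> = 2 * \<mu> * err_const / (\<nu> * real N)" by (simp add: field_simps)
    finally show ?thesis .
  qed
  have "(2 * \<mu> / \<nu>) * err_const / real N = 2 * \<mu> * err_const / (\<nu> * real N)" by (simp add: field_simps)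
  moreover have "rate \<mu> * b \<ge> (1 - (1 - lam) / (2 * real N)) * b"
    unfolding rate_def using b0 by (intro mult_right_mono) auto
  moreover have "(1 - (1 - lam) / (2 * real N)) * b = b * (1 - (1 - lam) / real N) + b * ((1 - lam) / (2 * real N))"
    by (simp add: field_simps)
  ultimately show ?thesis using e bb unfolding b_def by linarith
qed

lemma avg_lyap_aug_step:
  assumes inv: "tables_consistent S" and mu: "0 < \<mu>" "\<mu> \<le> step_bound"
  shows "(1 / real N) * (\<Sum>n<N. lyap \<mu> (aug_step \<mu> S n)) \<le> rate \<mu> * lyap \<mu> S"
proof -
  define X where "X = opt_dist S"
  define D where "D = snap_dist S"
  define U where "U = tab_dev S"
  define Ee where "Ee = (1 / real N) * (\<Sum>n<N. (norm (dir_err S n))^2)"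
  define Gg where "Gg = (1 / real N) * (\<Sum>n<N. (norm (direction S n))^2)"
  define Xn where "Xn = (1 / real N) * (\<Sum>n<N. opt_dist (aug_step \<mu> S n))"
  define Dn where "Dn = (1 / real N) * (\<Sum>n<N. snap_dist (aug_step \<mu> S n))"
  define Uq where "Uq = (1 / real N) * (\<Sum>n<N. tab_dev (aug_step \<mu> S n))"
  define a where "a = \<mu> * weight_snap"
  define b where "b = \<mu> * weight_tab"
  have X0: "X \<ge> 0" "D \<ge> 0" "U \<ge> 0"
    unfolding X_def D_def U_def by (simp_all add: opt_dist_nonneg snap_dist_nonneg tab_dev_nonneg)
  have a0: "a \<ge> 0" "b \<ge> 0" unfolding a_def b_def using mu weight_snap_pos weight_tab_pos by simp_all
  have Ee_le: "Ee \<le> err_const * ((1 / real N) * U + D)"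
    unfolding Ee_def U_def D_def by (rule avg_dir_err_sq_le[OF inv])
  have Gg_le: "Gg \<le> 3 * grad_lip^2 * X + 3 * L^2 * D + 3 * Ee"
    unfolding Gg_def X_def D_def Ee_def grad_lip_def by (rule avg_direction_sq_le)
  have "(2 * \<mu> / \<nu>) * Ee \<le> (2 * \<mu> / \<nu>) * (err_const * ((1 / real N) * U + D))"
    using Ee_le mu nu_pos by (intro mult_left_mono) auto
  moreover have "Xn \<le> (1 - \<mu> * \<nu> + 2 * \<mu>^2 * grad_lip^2) * X + 2 * \<mu>^2 * L^2 * D + (2 * \<mu> / \<nu>) * Ee"
    unfolding Xn_def X_def D_def Ee_def grad_lip_def
    by (rule avg_opt_dist_aug_step[OF mu(1) step_bound_consequences(1)[OF mu]])
  ultimately have Xn_le: "Xn \<le> (1 - \<mu> * \<nu> + 2 * \<mu>^2 * grad_lip^2) * X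
      + (2 * \<mu>^2 * L^2 + (2 * \<mu> / \<nu>) * err_const) * D + ((2 * \<mu> / \<nu>) * err_const / real N) * U"
    by (simp add: algebra_simps)
  have "3 * real N * \<mu>^2 * Gg
      \<le> 3 * real N * \<mu>^2 * (3 * grad_lip^2 * X + 3 * L^2 * D + 3 * (err_const * ((1 / real N) * U + D)))"
    using Gg_le Ee_le N_pos by (intro mult_left_mono) auto
  also have "\<dots> = (9 * real N * \<mu>^2 * grad_lip^2) * X + (9 * real N * \<mu>^2 * (L^2 + err_const)) * D
      + (9 * \<mu>^2 * err_const) * U"
    using N_pos by (simp add: field_simps)
  finally have Dn_le: "Dn \<le> (9 * real N * \<mu>^2 * grad_lip^2) * X
      + (1 - 1 / (2 * real N) + 9 * real N * \<mu>^2 * (L^2 + err_const)) * D + (9 * \<mu>^2 * err_const) * U"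
    using avg_snap_dist_aug_step[of \<mu> S] unfolding Dn_def D_def Gg_def by (simp add: algebra_simps)
  have Uq_le: "Uq \<le> (cons_const / (1 - lam)) * D + (1 - (1 - lam) / real N) * U"
    unfolding Uq_def D_def U_def using avg_tab_dev_aug_step[OF inv] by (simp add: algebra_simps)
  have "Xn + a * Dn + b * Uq \<le> rate \<mu> * (X + a * D + b * U)"
    by (rule weighted_sum_contraction[OF Xn_le Dn_le Uq_le a0 X0 lyap_coeff_opt_dist_le[OF mu, folded a_def]
          lyap_coeff_snap_dist_le[OF mu, folded a_def b_def] lyap_coeff_tab_dev_le[OF mu, folded a_def b_def]])
  moreover have "(1 / real N) * (\<Sum>n<N. lyap \<mu> (aug_step \<mu> S n)) = Xn + a * Dn + b * Uq"
    unfolding lyap_def Xn_def Dn_def Uq_def a_def b_def by (simp add: sum.distrib sum_distrib_left algebra_simps)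
  moreover have "lyap \<mu> S = X + a * D + b * U" unfolding lyap_def X_def D_def U_def a_def b_def by simp
  ultimately show ?thesis by simp
qed

definition index_seqs :: "nat \<Rightarrow> nat list set" where
  "index_seqs i = {xs. length xs = i \<and> set xs \<subseteq> {..<N}}"

lemma index_seqs_Suc: "index_seqs (Suc i) = (\<lambda>(xs, n). xs @ [n]) ` (index_seqs i \<times> {..<N})"
proof (intro equalityI subsetI)
  fix ys assume "ys \<in> index_seqs (Suc i)"
  then have ys: "length ys = Suc i" "set ys \<subseteq> {..<N}" unfolding index_seqs_def by auto
  then have ne: "ys \<noteq> []" by auto
  have "ys = butlast ys @ [last ys]" using ne by simp
  moreover have "butlast ys \<in> index_seqs i" using ys unfolding index_seqs_def by (auto dest: in_set_butlastD)
  moreover have "last ys \<in> {..<N}" using ys ne last_in_set by blast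
  ultimately show "ys \<in> (\<lambda>(xs, n). xs @ [n]) ` (index_seqs i \<times> {..<N})" by force
next
  fix ys assume "ys \<in> (\<lambda>(xs, n). xs @ [n]) ` (index_seqs i \<times> {..<N})"
  then show "ys \<in> index_seqs (Suc i)" unfolding index_seqs_def by auto
qed

lemma sum_index_seqs_Suc: "(\<Sum>xs\<in>index_seqs (Suc i). F xs) = (\<Sum>xs\<in>index_seqs i. \<Sum>n<N. F (xs @ [n]))"
proof -
  have inj: "inj_on (\<lambda>(xs, n). xs @ [n]) (index_seqs i \<times> {..<N})"
    by (auto simp: inj_on_def)
  have "(\<Sum>xs\<in>index_seqs (Suc i). F xs) = (\<Sum>p\<in>index_seqs i \<times> {..<N}. F ((\<lambda>(xs, n). xs @ [n]) p))"
    unfolding index_seqs_Suc by (simp add: sum.reindex[OF inj] comp_def)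
  also have "\<dots> = (\<Sum>xs\<in>index_seqs i. \<Sum>n<N. F (xs @ [n]))"
    by (subst sum.cartesian_product) (simp add: case_prod_beta)
  finally show ?thesis .
qed

lemma aug_run_snoc: "aug_run \<mu> (xs @ [n]) = aug_step \<mu> (aug_run \<mu> xs) n"
  unfolding aug_run_def by simp

lemma tables_consistent_aug_run: "tables_consistent (aug_run \<mu> xs)"
  unfolding aug_run_def by (rule tables_consistent_foldl[OF tables_consistent_init])

lemma lyap_aug_init: "lyap \<mu> aug_init = (norm wstar)^2"
  unfolding lyap_def opt_dist_def snap_dist_def tab_dev_def tab_err_def snap_pred_def aug_init_def iter_w_def snap_def tab_u_def by simp

lemma opt_dist_le_lyap: "0 \<le> \<mu> \<Longrightarrow> opt_dist S \<le> lyap \<mu> S"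
  unfolding lyap_def using snap_dist_nonneg tab_dev_nonneg weight_snap_pos weight_tab_pos
  by (simp add: add_nonneg_nonneg)

lemma sum_lyap_aug_run_le:
  assumes mu: "0 < \<mu>" "\<mu> \<le> step_bound"
  shows "(\<Sum>xs\<in>index_seqs i. lyap \<mu> (aug_run \<mu> xs)) \<le> (real N * rate \<mu>)^i * (norm wstar)^2"
proof (induction i)
  case 0
  have "index_seqs 0 = {[]}" unfolding index_seqs_def by auto
  then show ?case using lyap_aug_init[of \<mu>] by (simp add: aug_run_def)
next
  case (Suc i)
  have "(\<Sum>xs\<in>index_seqs (Suc i). lyap \<mu> (aug_run \<mu> xs)) = (\<Sum>xs\<in>index_seqs i. \<Sum>n<N. lyap \<mu> (aug_step \<mu> (aug_run \<mu> xs) n))"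
    unfolding sum_index_seqs_Suc aug_run_snoc ..
  also have "\<dots> \<le> (\<Sum>xs\<in>index_seqs i. real N * rate \<mu> * lyap \<mu> (aug_run \<mu> xs))"
  proof (rule sum_mono)
    fix xs
    have "(1 / real N) * (\<Sum>n<N. lyap \<mu> (aug_step \<mu> (aug_run \<mu> xs) n)) \<le> rate \<mu> * lyap \<mu> (aug_run \<mu> xs)"
      by (rule avg_lyap_aug_step[OF tables_consistent_aug_run mu])
    then show "(\<Sum>n<N. lyap \<mu> (aug_step \<mu> (aug_run \<mu> xs) n)) \<le> real N * rate \<mu> * lyap \<mu> (aug_run \<mu> xs)"
      using N_pos by (simp add: field_simps)
  qed
  also have "\<dots> = real N * rate \<mu> * (\<Sum>xs\<in>index_seqs i. lyap \<mu> (aug_run \<mu> xs))" by (simp add: sum_distrib_left)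
  also have "\<dots> \<le> real N * rate \<mu> * ((real N * rate \<mu>)^i * (norm wstar)^2)"
    using Suc.IH rate_pos[of \<mu>] N_pos by (intro mult_left_mono) auto
  finally show ?case by simp
qed

lemma vrd_msd_le:
  assumes mu: "0 < \<mu>" "\<mu> \<le> step_bound" and i: "i > 0"
  shows "vrd_msd A nbr blk N h \<gamma> dQ gr \<mu> wstar i k \<le> rate \<mu> ^ i * ((norm wstar)^2 / rate \<mu>)"
proof -
  have "(\<Sum>xs\<in>index_seqs (i - 1). blk_sqnorm blk k (fst (vrd_run A nbr blk N h \<gamma> dQ gr \<mu> xs) - wstar))
      \<le> (\<Sum>xs\<in>index_seqs (i - 1). lyap \<mu> (aug_run \<mu> xs))"
  proof (rule sum_mono)
    fix xs
    have "blk_sqnorm blk k (fst (vrd_run A nbr blk N h \<gamma> dQ gr \<mu> xs) - wstar) \<le> opt_dist (aug_run \<mu> xs)"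
      unfolding opt_dist_def iter_w_def fst_aug_run[symmetric] by (rule blk_sqnorm_le_norm_sq)
    also have "\<dots> \<le> lyap \<mu> (aug_run \<mu> xs)" using mu by (intro opt_dist_le_lyap) auto
    finally show "blk_sqnorm blk k (fst (vrd_run A nbr blk N h \<gamma> dQ gr \<mu> xs) - wstar) \<le> lyap \<mu> (aug_run \<mu> xs)" .
  qed
  also have "\<dots> \<le> (real N * rate \<mu>)^(i - 1) * (norm wstar)^2" by (rule sum_lyap_aug_run_le[OF mu])
  finally have s: "(\<Sum>xs\<in>index_seqs (i - 1). blk_sqnorm blk k (fst (vrd_run A nbr blk N h \<gamma> dQ gr \<mu> xs) - wstar))
      \<le> (real N * rate \<mu>)^(i - 1) * (norm wstar)^2" .
  have "vrd_msd A nbr blk N h \<gamma> dQ gr \<mu> wstar i k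
      = (\<Sum>xs\<in>index_seqs (i - 1). blk_sqnorm blk k (fst (vrd_run A nbr blk N h \<gamma> dQ gr \<mu> xs) - wstar)) / real N ^ (i - 1)"
    unfolding vrd_msd_def index_seqs_def ..
  also have "\<dots> \<le> (real N * rate \<mu>)^(i - 1) * (norm wstar)^2 / real N ^ (i - 1)"
    using s N_pos by (simp add: divide_right_mono)
  also have "\<dots> = rate \<mu> ^ (i - 1) * (norm wstar)^2"
    using N_pos by (simp add: power_mult_distrib)
  also have "\<dots> = rate \<mu> ^ i * ((norm wstar)^2 / rate \<mu>)"
  proof -
    have "rate \<mu> ^ i = rate \<mu> * rate \<mu> ^ (i - 1)" using i by (metis Suc_diff_1 power_Suc)
    then show ?thesis using rate_pos[of \<mu>] by (simp add: field_simps)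
  qed
  finally show ?thesis .
qed

end

text \<open>Connectivity of the graph and a positive diagonal entry of \<open>A\<close> only serve to make
  \<open>\<lambda> < 1\<close>, which is assumed directly; convexity of \<open>r\<close> is subsumed by the strong convexity
  of the risk.\<close>
theorem corollary1:
  fixes N :: nat
    and h :: "nat \<Rightarrow> real^'m::finite"
    and \<gamma> :: "nat \<Rightarrow> real"
    and blk :: "'m \<Rightarrow> 'k::finite"
    and Q dQ :: "real \<Rightarrow> real \<Rightarrow> real"
    and r :: "'k \<Rightarrow> real^'m \<Rightarrow> real"
    and gr :: "'k \<Rightarrow> real^'m \<Rightarrow> real^'m"
    and A :: "real^'k^'k"
    and nbr :: "'k \<Rightarrow> 'k \<Rightarrow> bool"
    and L \<delta> \<eta> \<nu> lam :: real
    and wstar :: "real^'m"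
  assumes N_pos: "N \<ge> 1"
    and Q_deriv: "\<And>z g. ((\<lambda>x. Q x g) has_real_derivative dQ z g) (at z)"
    and L_pos: "L > 0" and delta_pos: "\<delta> > 0"
    and Q_lip: "\<And>n w1 w2. n < N \<Longrightarrow>
        norm (dQ (h n \<bullet> w1) (\<gamma> n) *\<^sub>R h n - dQ (h n \<bullet> w2) (\<gamma> n) *\<^sub>R h n) \<le> L * norm (w1 - w2)"
    and dQ_lip: "\<And>n z1 z2. n < N \<Longrightarrow> \<bar>dQ z1 (\<gamma> n) - dQ z2 (\<gamma> n)\<bar> \<le> \<delta> * \<bar>z1 - z2\<bar>"
    and r_block: "\<And>k w w'. (\<And>j. blk j = k \<Longrightarrow> w$j = w'$j) \<Longrightarrow> r k w = r k w'"
    and r_deriv: "\<And>k w. (r k has_derivative (\<lambda>x. gr k w \<bullet> x)) (at w)"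
    and r_convex: "convex_on UNIV (\<lambda>w. \<Sum>k\<in>UNIV. r k w)"
    and r_lip: "\<And>w1 w2. norm ((\<Sum>k\<in>UNIV. gr k w1) - (\<Sum>k\<in>UNIV. gr k w2)) \<le> \<eta> * norm (w1 - w2)"
    and nu_pos: "\<nu> > 0"
    and R_strong: "\<And>w1 w2. (emp_risk_grad N h \<gamma> dQ gr w1 - emp_risk_grad N h \<gamma> dQ gr w2) \<bullet> (w1 - w2)
                      \<ge> \<nu> * (norm (w1 - w2))^2"
    and wstar_min: "\<And>w. emp_risk N h \<gamma> Q r wstar \<le> emp_risk N h \<gamma> Q r w"
    and A_nonneg: "\<And>l k. A$l$k \<ge> 0"
    and A_support: "\<And>l k. A$l$k > 0 \<Longrightarrow> l = k \<or> nbr l k"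
    and A_sym: "transpose A = A"
    and A_stoch: "\<And>l. (\<Sum>k\<in>UNIV. A$l$k) = 1"
    and A_diag: "\<exists>k. A$k$k > 0"
    and nbr_conn: "\<And>k l. nbr\<^sup>*\<^sup>* k l"
    and lambda_def: "lam = second_largest_abs_eig A"
    and lambda_range: "0 < lam" "lam < 1"
  shows "\<exists>\<mu>bar > 0. \<forall>\<mu>. 0 < \<mu> \<and> \<mu> \<le> \<mu>bar \<longrightarrow>
           (\<exists>C::real. \<forall>k i. i > 0 \<longrightarrow>
              vrd_msd A nbr blk N h \<gamma> dQ gr \<mu> wstar i k
                \<le> (max (1 - (1 - lam) / (2 * real N)) (1 - \<mu> * \<nu> / 4)) ^ i * C)"
proof -
  interpret vrd N h \<gamma> blk Q dQ r gr A nbr L \<delta> \<eta> \<nu> lam wstar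
    by unfold_locales (fact assms)+
  have "vrd_msd A nbr blk N h \<gamma> dQ gr \<mu> wstar i k \<le> rate \<mu> ^ i * ((norm wstar)^2 / rate \<mu>)"
    if "0 < \<mu>" "\<mu> \<le> step_bound" "0 < i" for \<mu> i k
    by (rule vrd_msd_le[OF that])
  then show ?thesis using step_bound_pos unfolding rate_def by blast
qed

end
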